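(* Let $\Lambda$ be a set of pairwise compatible libraries, $L$ a library compatible with all of them and with $L\notin\Lambda$, and $I$ an implementation of $L$ that is well defined for $L$ using $\Lambda$. If $I$ is locally sound, then $I$ is a sound implementation of $L$ using $\Lambda$: for every concurrent program $\vec p$ whose method calls are all to methods of libraries in $\Lambda\uplus\{L\}$ and such that $\mathsf{loc}(I)\cap\mathsf{loc}(\vec p)=\emptyset$, we have $\mathsf{outcome}_\Lambda(\langle\!\langle\vec p\rangle\!\rangle_I)\subseteq\mathsf{outcome}_{\Lambda\uplus\{L\}}(\vec p)$.
   Context: Fix a set $\mathsf{Val}$ of values, a subset $\mathsf{Loc}\subseteq\mathsf{Val}$ of locations, a set $\mathsf{Method}$ of methods, a finite set of threads $\mathsf{Tid}=\{1,\dots,T\}$, and $\mathsf{EventId}=\mathbb N$. Programs. Sequential programs are given by the grammar $p::= v \mid m(v_1,\dots,v_k)\mid \mathtt{let}\ p\ \mathsf f\mid \mathtt{loop}\ p\mid \mathtt{break}_k\ v$, where $v,v_i\in\mathsf{Val}$, $m\in\mathsf{Method}$, $\mathsf f:\mathsf{Val}\to\mathsf{SeqProg}$, and $k\in\mathbb N^{+}$. A concurrent program is a tuple $\vec p=\langle p_1,\dots,p_T\rangle$ of sequential programs, $p_t$ run by thread $t$. Events and plain executions. Labels are $\mathsf{Lab}=\mathsf{Method}\times\mathsf{Val}^*\times\mathsf{Val}$ (method, inputs, output); events are $\mathsf{Event}=\mathsf{Tid}\times\mathsf{EventId}\times\mathsf{Lab}$; for $e=\langle t,\iota,l\rangle$,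 $\mathrm{thread}(e)=t$. A plain execution is a pair $\langle E,po\rangle$ with $E\subseteq\mathsf{Event}$, $po\subseteq E\times E$, $po=\bigcup_{t}po|_t$, where $po|_t$ (restriction to events of thread $t$) is a strict total order on the events of $t$. Write $\emptyset_G=\langle\emptyset,\emptyset\rangle$ and $\{e\}_G=\langle\{e\},\emptyset\rangle$. For $G_i=\langle E_i,po_i\rangle$ with $E_1\cap E_2=\emptyset$: $G_1;G_2=\langle E_1\cup E_2,\,po_1\cup po_2\cup(E_1\times E_2)\rangle$ and $G_1\parallel G_2=\langle E_1\cup E_2,\,po_1\cup po_2\rangle$. Plain semantics. $[\![p]\!]_t$ is a set of pairs $\langle\langle v,k\rangle,G\rangle$ (output value $v$, break number $k\in\mathbb N$, plain execution $G$): $[\![v]\!]_t=\{\langle\langle v,0\rangle,\emptyset_G\rangle\}$; $[\![\mathtt{break}_k\,v]\!]_t=\{\langle\langle v,k\rangle,\emptyset_G\rangle\}$; $[\![m(\vec v)]\!]_t=\{\langle\langle v',0\rangle,\{\langle t,\iota,\langle m,\vec v,v'\rangle\rangle\}_G\rangle : v'\in\mathsf{Val},\iota\in\mathsf{EventId}\}$; $[\![\mathtt{let}\ p\ \mathsf f]\!]_t=\{\langle r,G_1;G_2\rangle:\langle\langle v,0\rangle,G_1\rangle\in[\![p]\!]_t,\ \langle r,G_2\rangle\in[\![\mathsf f\,v]\!]_t\}\cup\{\langle\langle v,k\rangle,G_1\rangle\in[\![p]\!]_t: k\neq0\}$; $[\![\mathtt{loop}\ p]\!]_t=\bigcup_{j\in\mathbb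 N}\{\langle\langle v,k\rangle,G_0;\dots;G_j\rangle : (\forall i<j.\ \langle\langle\_,0\rangle,G_i\rangle\in[\![p]\!]_t)\wedge\langle\langle v,k+1\rangle,G_j\rangle\in[\![p]\!]_t\}$ (compositions taken only when event sets are disjoint). For concurrent programs, $[\![\langle p_1,\dots,p_T\rangle]\!]=\{\langle\langle v_1,\dots,v_T\rangle,\parallel_{t}G_t\rangle:\forall t.\ \langle\langle v_t,0\rangle,G_t\rangle\in[\![p_t]\!]_t\}$. Stamps and executions. Fix a set $\mathsf{Stamp}$ and a relation $to\subseteq\mathsf{Stamp}\times\mathsf{Stamp}$. An execution is $\langle E,po,stmp,so,hb\rangle$ where $\langle E,po\rangle$ is a plain execution, $stmp$ maps each event of $E$ to a nonempty set of stamps, inducing subevents $\mathsf{SEvent}=\{\langle e,a\rangle: e\in E, a\in stmp(e)\}$, and $so,hb\subseteq\mathsf{SEvent}\times\mathsf{SEvent}$. Its preserved program order is $ppo=\{\langle\langle e_1,a_1\rangle,\langle e_2,a_2\rangle\rangle:\langle e_1,e_2\rangle\in po,\ a_i\in stmp(e_i),\ \langle a_1,a_2\rangle\in to\}$. Libraries. A library is a triple $L=\langle M,\mathsf{loc},\mathcal C\rangle$: $M\subseteq\mathsf{Method}$; $\mathsf{loc}$ maps each event whose method lies in $M$ to a set of locations; $\mathcal C$ is a set of executions satisfying (monotonicity) if $\langle E,po,stmp,so,hb\rangle\in\mathcal C$ and $(ppo\cup so)^+\subseteq hb'\subseteq hb$ then $\langle E,po,stmp,so,hb'\rangle\in\mathcal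 C$, and (decomposability) if $\langle E_1\uplus E_2,po,stmp,so,hb\rangle\in\mathcal C$ and $\mathsf{loc}(E_1)\cap\mathsf{loc}(E_2)=\emptyset$ then its restriction to $E_1$ (restricting $po$, $stmp$, and $so,hb$ to subevents of events in $E_1$) is in $\mathcal C$. For a set $E$ of events, $E|_L$ is the set of events of $E$ whose method is in $L.M$; for an execution, restriction $|_L$ restricts $E$, $po$, $stmp$, and $so,hb$ to (subevents of) events in $E|_L$. For an event $e$, $\mathsf{loc}(e)$ is given by the library containing its method, and $\mathsf{loc}(E)=\bigcup_{e\in E}\mathsf{loc}(e)$. Two libraries are compatible if their method sets are disjoint. Consistency and outcomes. For a set $\Lambda$ of pairwise compatible libraries, an execution $\langle E,po,stmp,so,hb\rangle$ is $\Lambda$-consistent if: $(ppo\cup so)^+\subseteq hb$ and $hb$ is a strict partial order; $E=\bigcup_{L\in\Lambda}E|_L$ and $so=\bigcup_{L\in\Lambda}so|_L$; and for every $L\in\Lambda$ the restriction to $L$ belongs to $L.\mathcal C$. Then $\mathsf{outcome}_\Lambda(\vec p)=\{\vec v:\exists\,\Lambda\text{-consistent }\langle E,po,stmp,so,hb\rangle.\ \langle\vec v,\langle E,po\rangle\rangle\in[\![\vec p]\!]\}$, and $\mathsf{loc}(\vec p)=\bigcup_{\langle\_,\langle E,\_\rangle\rangle\in[\![\vec p]\!]}\mathsf{loc}(E)$. Implementations. An implementation of $L$ is a function $I:\mathsf{Tid}\times L.M\times\mathsf{Val}^*\to\mathsf{SeqProg}$. It is well defined for $L$ using $\Lambda$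 if $L\notin\Lambda$ and for all $t,m,\vec v$: $I(t,m,\vec v)$ only calls methods of libraries in $\Lambda$; no element of $[\![I(t,m,\vec v)]\!]_t$ has the form $\langle\langle\_,k+1\rangle,\_\rangle$; and if $\langle\langle v,0\rangle,\langle E,po\rangle\rangle\in[\![I(t,m,\vec v)]\!]_t$ then $E\neq\emptyset$. $\mathsf{loc}(I)=\bigcup_{t,m,\vec v}\bigcup_{\langle\_,\langle E,\_\rangle\rangle\in[\![I(t,m,\vec v)]\!]_t}\mathsf{loc}(E)$. The translation $\langle\!\langle\cdot\rangle\!\rangle$ replaces, in thread $t$, each call $m(\vec v)$ with $m\in L.M$ by $I(t,m,\vec v)$ and leaves everything else unchanged ($\langle\!\langle v\rangle\!\rangle_t=v$, $\langle\!\langle\mathtt{break}_k v\rangle\!\rangle_t=\mathtt{break}_k v$, $\langle\!\langle\mathtt{loop}\,p\rangle\!\rangle_t=\mathtt{loop}\,\langle\!\langle p\rangle\!\rangle_t$, $\langle\!\langle\mathtt{let}\,p\,\mathsf f\rangle\!\rangle_t=\mathtt{let}\,\langle\!\langle p\rangle\!\rangle_t\,(\lambda v.\langle\!\langle\mathsf f\,v\rangle\!\rangle_t)$), and $\langle\!\langle\langle p_1,\dots,p_T\rangle\rangle\!\rangle_I=\langle\langle\!\langle p_1\rangle\!\rangle_1,\dots,\langle\!\langle p_T\rangle\!\rangle_T\rangle$. Abstraction. For plain executions $G=\langle E,po\rangle$ (using methods of $\Lambda$) and $G'=\langle E',po'\rangle$ (using methods of $L$), a surjective $f:E\to E'$ abstracts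 $G$ to $G'$ if: $E|_L=\emptyset$ and $E'|_L=E'$; $f(po)\subseteq(po')^*$ (where $f(r)=\{\langle f(x),f(y)\rangle:\langle x,y\rangle\in r\}$ and $^*$ is reflexive-transitive closure) and for all $e_1,e_2$, $\langle f(e_1),f(e_2)\rangle\in po'$ implies $\langle e_1,e_2\rangle\in po$; and for every $e'=\langle t,\iota,\langle m,\vec v,v'\rangle\rangle\in E'$, $\langle\langle v',0\rangle,G|_{f^{-1}(e')}\rangle\in[\![I(t,m,\vec v)]\!]_t$, where $G|_A=\langle A,po\cap(A\times A)\rangle$. Local soundness. A well-defined implementation $I$ of $L$ using $\Lambda$ is locally sound if, whenever $\mathcal G=\langle E,po,stmp,so,hb\rangle$ is $\Lambda$-consistent and $f$ abstracts $\langle E,po\rangle$ to $\langle E',po'\rangle$, there exist $stmp'$ (on $E'$), $so'$, and a function $g$ from the subevents of $\langle E',po',stmp'\rangle$ to $\mathcal G.\mathsf{SEvent}$ such that: (i) if $g(\langle e',a'\rangle)=\langle e,a\rangle$ then $f(e)=e'$, and for every stamp $a_0$ with $\langle a_0,a'\rangle\in to$ there is $\langle e_1,a_1\rangle\in\mathcal G.\mathsf{SEvent}$ with $f(e_1)=e'$, $\langle a_0,a_1\rangle\in to$ and $\langle\langle e_1,a_1\rangle,\langle e,a\rangle\rangle\in hb^*$, and for every stamp $a_0$ with $\langle a',a_0\rangle\in to$ there is $\langle e_2,a_2\rangle\in\mathcal G.\mathsf{SEvent}$ with $f(e_2)=e'$, $\langle a_2,a_0\rangle\in to$ and $\langle\langle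 e,a\rangle,\langle e_2,a_2\rangle\rangle\in hb^*$; (ii) $g(so')\subseteq hb$; (iii) for every transitive $hb'$ with $(ppo'\cup so')^+\subseteq hb'$ and $g(hb')\subseteq hb$, we have $\langle E',po',stmp',so',hb'\rangle\in L.\mathcal C$, where $ppo'$ is the preserved program order of $\langle E',po',stmp'\rangle$. *)

theory Defs
  imports Main
begin

text \<open>Values 'v, methods 'm. Break k v is only meaningful for k >= 1 (see seqprog).\<close>
datatype ('v, 'm) prog =
    PVal 'v
  | Call 'm "'v list"
  | Let "('v, 'm) prog" "'v \<Rightarrow> ('v, 'm) prog"
  | Loop "('v, 'm) prog"
  | Break nat 'v

primrec seqprog :: "('v, 'm) prog \<Rightarrow> bool" where
  "seqprog (PVal v) = True"
| "seqprog (Call m vs) = True"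
| "seqprog (Let p f) = (seqprog p \<and> (\<forall>v. seqprog (f v)))"
| "seqprog (Loop p) = seqprog p"
| "seqprog (Break k v) = (k \<ge> 1)"

primrec calls_in :: "'m set \<Rightarrow> ('v, 'm) prog \<Rightarrow> bool" where
  "calls_in S (PVal v) = True"
| "calls_in S (Call m vs) = (m \<in> S)"
| "calls_in S (Let p f) = (calls_in S p \<and> (\<forall>v. calls_in S (f v)))"
| "calls_in S (Loop p) = calls_in S p"
| "calls_in S (Break k v) = True"

type_synonym ('v, 'm) lab = "'m \<times> 'v list \<times> 'v"
type_synonym ('v, 'm) event = "nat \<times> nat \<times> ('v, 'm) lab"
type_synonym ('v, 'm) pexec = "('v, 'm) event set \<times> (('v, 'm) event \<times> ('v, 'm) event) set"

definition thread :: "('v, 'm) event \<Rightarrow> nat" where "thread e = fst e"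
definition meth :: "('v, 'm) event \<Rightarrow> 'm" where "meth e = fst (snd (snd e))"
definition args :: "('v, 'm) event \<Rightarrow> 'v list" where "args e = fst (snd (snd (snd e)))"
definition outv :: "('v, 'm) event \<Rightarrow> 'v" where "outv e = snd (snd (snd (snd e)))"

definition plain_exec :: "nat \<Rightarrow> ('v, 'm) pexec \<Rightarrow> bool" where
  "plain_exec T G \<longleftrightarrow>
     (\<forall>e\<in>fst G. thread e \<in> {1..T}) \<and>
     snd G \<subseteq> fst G \<times> fst G \<and>
     (\<forall>(a, b)\<in>snd G. thread a = thread b) \<and>
     (\<forall>t. let Et = {e\<in>fst G. thread e = t}; r = snd G \<inter> (Et \<times> Et)
          in trans r \<and> irrefl r \<and> total_on Et r)"

definition empty_G :: "('v, 'm) pexec" where "empty_G = ({}, {})"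

definition seqc :: "('v, 'm) pexec \<Rightarrow> ('v, 'm) pexec \<Rightarrow> ('v, 'm) pexec" where
  "seqc G1 G2 = (fst G1 \<union> fst G2, snd G1 \<union> snd G2 \<union> (fst G1 \<times> fst G2))"

definition seq_list :: "('v, 'm) pexec list \<Rightarrow> ('v, 'm) pexec" where
  "seq_list Gs = foldr seqc Gs empty_G"

primrec sem :: "nat \<Rightarrow> ('v, 'm) prog \<Rightarrow> (('v \<times> nat) \<times> ('v, 'm) pexec) set" where
  "sem t (PVal v) = {((v, 0), empty_G)}"
| "sem t (Break k v) = {((v, k), empty_G)}"
| "sem t (Call m vs) = {((v', 0), ({(t, \<iota>, (m, vs, v'))}, {})) | v' \<iota>. True}"
| "sem t (Let p f) =
     {(r, seqc G1 G2) | r G1 G2 v. ((v, 0), G1) \<in> sem t p \<and> (r, G2) \<in> sem t (f v)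
                                   \<and> fst G1 \<inter> fst G2 = {}}
     \<union> {x \<in> sem t p. snd (fst x) \<noteq> 0}"
| "sem t (Loop p) =
     {((v, k), seq_list Gs) | v k Gs j.
        length Gs = Suc j \<and>
        (\<forall>i<j. \<exists>u. ((u, 0), Gs ! i) \<in> sem t p) \<and>
        ((v, Suc k), Gs ! j) \<in> sem t p \<and>
        (\<forall>i<length Gs. \<forall>i'<length Gs. i \<noteq> i' \<longrightarrow> fst (Gs ! i) \<inter> fst (Gs ! i') = {})}"

text \<open>Concurrent programs: a list of length T; thread t (1 <= t <= T) runs ps ! (t - 1).\<close>
definition sem_conc :: "('v, 'm) prog list \<Rightarrow> ('v list \<times> ('v, 'm) pexec) set" where
  "sem_conc ps = {(vs, (\<Union>i<length ps. fst (Gs ! i), \<Union>i<length ps. snd (Gs ! i))) | vs Gs.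
      length vs = length ps \<and> length Gs = length ps \<and>
      (\<forall>i<length ps. ((vs ! i, 0), Gs ! i) \<in> sem (Suc i) (ps ! i))}"

record ('v, 'm, 's) execution =
  ev   :: "('v, 'm) event set"
  po   :: "(('v, 'm) event \<times> ('v, 'm) event) set"
  stmp :: "('v, 'm) event \<Rightarrow> 's set"
  so   :: "((('v, 'm) event \<times> 's) \<times> (('v, 'm) event \<times> 's)) set"
  hb   :: "((('v, 'm) event \<times> 's) \<times> (('v, 'm) event \<times> 's)) set"

definition SEv :: "('v, 'm, 's, 'z) execution_scheme \<Rightarrow> (('v, 'm) event \<times> 's) set" where
  "SEv X = {(e, a). e \<in> ev X \<and> a \<in> stmp X e}"

text \<open>stmp is a function on E only; represented canonically as {} outside E.\<close>
definition wf_exec :: "nat \<Rightarrow> ('v, 'm, 's) execution \<Rightarrow> bool" where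
  "wf_exec T X \<longleftrightarrow> plain_exec T (ev X, po X) \<and>
     (\<forall>e\<in>ev X. stmp X e \<noteq> {}) \<and> (\<forall>e. e \<notin> ev X \<longrightarrow> stmp X e = {}) \<and>
     so X \<subseteq> SEv X \<times> SEv X \<and> hb X \<subseteq> SEv X \<times> SEv X"

definition ppo :: "('s \<times> 's) set \<Rightarrow> ('v, 'm, 's, 'z) execution_scheme
                   \<Rightarrow> ((('v, 'm) event \<times> 's) \<times> (('v, 'm) event \<times> 's)) set" where
  "ppo to X = {((e1, a1), (e2, a2)) | e1 a1 e2 a2.
      (e1, e2) \<in> po X \<and> a1 \<in> stmp X e1 \<and> a2 \<in> stmp X e2 \<and> (a1, a2) \<in> to}"

definition restrict_exec :: "('v, 'm, 's) execution \<Rightarrow> ('v, 'm) event set \<Rightarrow> ('v, 'm, 's) execution" where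
  "restrict_exec X A =
     \<lparr> ev = ev X \<inter> A, po = po X \<inter> (A \<times> A),
       stmp = (\<lambda>e. if e \<in> A then stmp X e else {}),
       so = so X \<inter> {(x, y). fst x \<in> A \<and> fst y \<in> A},
       hb = hb X \<inter> {(x, y). fst x \<in> A \<and> fst y \<in> A} \<rparr>"

record ('v, 'm, 's) library =
  lM   :: "'m set"
  lloc :: "('v, 'm) event \<Rightarrow> 'v set"
  lC   :: "('v, 'm, 's) execution set"

definition lib_locs :: "('v, 'm, 's) library \<Rightarrow> ('v, 'm) event set \<Rightarrow> 'v set" where
  "lib_locs Lb E = (\<Union>e\<in>E. lloc Lb e)"

definition is_library :: "nat \<Rightarrow> ('s \<times> 's) set \<Rightarrow> ('v, 'm, 's) library \<Rightarrow> bool" where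
  "is_library T to Lb \<longleftrightarrow>
     (\<forall>X\<in>lC Lb. wf_exec T X) \<and>
     (\<forall>X\<in>lC Lb. \<forall>hb'. (ppo to X \<union> so X)\<^sup>+ \<subseteq> hb' \<and> hb' \<subseteq> hb X \<longrightarrow> X\<lparr>hb := hb'\<rparr> \<in> lC Lb) \<and>
     (\<forall>X\<in>lC Lb. \<forall>E1 E2. ev X = E1 \<union> E2 \<and> E1 \<inter> E2 = {} \<and> lib_locs Lb E1 \<inter> lib_locs Lb E2 = {}
          \<longrightarrow> restrict_exec X E1 \<in> lC Lb)"

definition compatible :: "('v, 'm, 's) library \<Rightarrow> ('v, 'm, 's) library \<Rightarrow> bool" where
  "compatible L1 L2 \<longleftrightarrow> lM L1 \<inter> lM L2 = {}"

definition pairwise_compatible :: "('v, 'm, 's) library set \<Rightarrow> bool" where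
  "pairwise_compatible \<Lambda> \<longleftrightarrow> (\<forall>L1\<in>\<Lambda>. \<forall>L2\<in>\<Lambda>. L1 \<noteq> L2 \<longrightarrow> compatible L1 L2)"

definition evs_of :: "('v, 'm, 's) library \<Rightarrow> ('v, 'm) event set \<Rightarrow> ('v, 'm) event set" where
  "evs_of Lb E = {e\<in>E. meth e \<in> lM Lb}"

definition restrict_lib :: "('v, 'm, 's) execution \<Rightarrow> ('v, 'm, 's) library \<Rightarrow> ('v, 'm, 's) execution" where
  "restrict_lib X Lb = restrict_exec X (evs_of Lb (ev X))"

definition loc_ev :: "('v, 'm, 's) library set \<Rightarrow> ('v, 'm) event \<Rightarrow> 'v set" where
  "loc_ev \<Lambda> e = \<Union>{lloc Lb e | Lb. Lb \<in> \<Lambda> \<and> meth e \<in> lM Lb}"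

definition locs :: "('v, 'm, 's) library set \<Rightarrow> ('v, 'm) event set \<Rightarrow> 'v set" where
  "locs \<Lambda> E = (\<Union>e\<in>E. loc_ev \<Lambda> e)"

definition consistent :: "nat \<Rightarrow> ('s \<times> 's) set \<Rightarrow> ('v, 'm, 's) library set \<Rightarrow> ('v, 'm, 's) execution \<Rightarrow> bool" where
  "consistent T to \<Lambda> X \<longleftrightarrow> wf_exec T X \<and>
     (ppo to X \<union> so X)\<^sup>+ \<subseteq> hb X \<and> irrefl (hb X) \<and> trans (hb X) \<and>
     ev X = (\<Union>Lb\<in>\<Lambda>. evs_of Lb (ev X)) \<and>
     so X = (\<Union>Lb\<in>\<Lambda>. so (restrict_lib X Lb)) \<and>
     (\<forall>Lb\<in>\<Lambda>. restrict_lib X Lb \<in> lC Lb)"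

definition outcome :: "nat \<Rightarrow> ('s \<times> 's) set \<Rightarrow> ('v, 'm, 's) library set \<Rightarrow> ('v, 'm) prog list \<Rightarrow> 'v list set" where
  "outcome T to \<Lambda> ps = {vs. \<exists>X. consistent T to \<Lambda> X \<and> (vs, (ev X, po X)) \<in> sem_conc ps}"

definition loc_prog :: "('v, 'm, 's) library set \<Rightarrow> ('v, 'm) prog list \<Rightarrow> 'v set" where
  "loc_prog \<Lambda> ps = \<Union>{locs \<Lambda> (fst G) | vs G. (vs, G) \<in> sem_conc ps}"

type_synonym ('v, 'm) impl = "nat \<Rightarrow> 'm \<Rightarrow> 'v list \<Rightarrow> ('v, 'm) prog"

definition well_defined :: "nat \<Rightarrow> ('v, 'm) impl \<Rightarrow> ('v, 'm, 's) library \<Rightarrow> ('v, 'm, 's) library set \<Rightarrow> bool" where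
  "well_defined T I L \<Lambda> \<longleftrightarrow> L \<notin> \<Lambda> \<and>
     (\<forall>t\<in>{1..T}. \<forall>m\<in>lM L. \<forall>vs.
        seqprog (I t m vs) \<and>
        calls_in (\<Union>(lM ` \<Lambda>)) (I t m vs) \<and>
        (\<forall>v k G. ((v, Suc k), G) \<notin> sem t (I t m vs)) \<and>
        (\<forall>v G. ((v, 0), G) \<in> sem t (I t m vs) \<longrightarrow> fst G \<noteq> {}))"

definition loc_impl :: "nat \<Rightarrow> ('v, 'm, 's) library set \<Rightarrow> ('v, 'm) impl \<Rightarrow> ('v, 'm, 's) library \<Rightarrow> 'v set" where
  "loc_impl T \<Lambda> I L = \<Union>{locs \<Lambda> (fst G) | t m vs r G.
      t \<in> {1..T} \<and> m \<in> lM L \<and> (r, G) \<in> sem t (I t m vs)}"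

primrec transl :: "('v, 'm) impl \<Rightarrow> ('v, 'm, 's) library \<Rightarrow> nat \<Rightarrow> ('v, 'm) prog \<Rightarrow> ('v, 'm) prog" where
  "transl I L t (PVal v) = PVal v"
| "transl I L t (Call m vs) = (if m \<in> lM L then I t m vs else Call m vs)"
| "transl I L t (Let p f) = Let (transl I L t p) (\<lambda>v. transl I L t (f v))"
| "transl I L t (Loop p) = Loop (transl I L t p)"
| "transl I L t (Break k v) = Break k v"

definition transl_conc :: "('v, 'm) impl \<Rightarrow> ('v, 'm, 's) library \<Rightarrow> ('v, 'm) prog list \<Rightarrow> ('v, 'm) prog list" where
  "transl_conc I L ps = map (\<lambda>i. transl I L (Suc i) (ps ! i)) [0..<length ps]"

definition abstracts :: "('v, 'm) impl \<Rightarrow> ('v, 'm, 's) library \<Rightarrow> ('v, 'm) pexec \<Rightarrow> ('v, 'm) pexec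
                         \<Rightarrow> (('v, 'm) event \<Rightarrow> ('v, 'm) event) \<Rightarrow> bool" where
  "abstracts I L G G' f \<longleftrightarrow>
     f ` fst G = fst G' \<and>
     evs_of L (fst G) = {} \<and> evs_of L (fst G') = fst G' \<and>
     (\<forall>(x, y)\<in>snd G. (f x, f y) \<in> (snd G')\<^sup>*) \<and>
     (\<forall>e1\<in>fst G. \<forall>e2\<in>fst G. (f e1, f e2) \<in> snd G' \<longrightarrow> (e1, e2) \<in> snd G) \<and>
     (\<forall>e'\<in>fst G'. let A = {e\<in>fst G. f e = e'} in
        ((outv e', 0), (A, snd G \<inter> (A \<times> A))) \<in> sem (thread e') (I (thread e') (meth e') (args e')))"

definition locally_sound :: "nat \<Rightarrow> ('s \<times> 's) set \<Rightarrow> ('v, 'm) impl \<Rightarrow> ('v, 'm, 's) library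
                             \<Rightarrow> ('v, 'm, 's) library set \<Rightarrow> bool" where
  "locally_sound T to I L \<Lambda> \<longleftrightarrow>
   (\<forall>X E' po' f. consistent T to \<Lambda> X \<and> plain_exec T (E', po') \<and> abstracts I L (ev X, po X) (E', po') f \<longrightarrow>
     (\<exists>stmp' so' g.
        let S' = {(e, a). e \<in> E' \<and> a \<in> stmp' e};
            X0 = \<lparr> ev = E', po = po', stmp = stmp', so = so', hb = {} \<rparr>
        in (\<forall>e\<in>E'. stmp' e \<noteq> {}) \<and> (\<forall>e. e \<notin> E' \<longrightarrow> stmp' e = {}) \<and>
           so' \<subseteq> S' \<times> S' \<and>
           (\<forall>x\<in>S'. g x \<in> SEv X) \<and>
           (\<forall>e' a' e a. (e', a') \<in> S' \<and> g (e', a') = (e, a) \<longrightarrow>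
               f e = e' \<and>
               (\<forall>a0. (a0, a') \<in> to \<longrightarrow> (\<exists>e1 a1. (e1, a1) \<in> SEv X \<and> f e1 = e' \<and> (a0, a1) \<in> to \<and>
                                               ((e1, a1), (e, a)) \<in> (hb X)\<^sup>*)) \<and>
               (\<forall>a0. (a', a0) \<in> to \<longrightarrow> (\<exists>e2 a2. (e2, a2) \<in> SEv X \<and> f e2 = e' \<and> (a2, a0) \<in> to \<and>
                                               ((e, a), (e2, a2)) \<in> (hb X)\<^sup>*))) \<and>
           (\<forall>(x, y)\<in>so'. (g x, g y) \<in> hb X) \<and>
           (\<forall>hb'. hb' \<subseteq> S' \<times> S' \<and> trans hb' \<and> (ppo to X0 \<union> so')\<^sup>+ \<subseteq> hb' \<and>
                  (\<forall>(x, y)\<in>hb'. (g x, g y) \<in> hb X)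
                  \<longrightarrow> X0\<lparr>hb := hb'\<rparr> \<in> lC L)))"

end

theory Submission
  imports Defs
begin

text \<open>
  Take a \<open>\<Lambda>\<close>-consistent execution \<open>X\<close> of the translated program. In every thread its events
  split into client events and disjoint blocks, each block being one complete run of \<open>I\<close> for a
  call to \<open>L\<close>. By induction on the program, program order relates all events of a block in the
  same way to every event outside it, so collapsing every block to one fresh event labelled by its
  call yields a plain execution of the source program.

  The implementation events on their own form a \<open>\<Lambda>\<close>-consistent execution: their locations are
  those of \<open>I\<close>, disjoint from the locations of the client events, so decomposability of each
  library splits off its part. Collapsing abstracts this execution to the call events, and local
  soundness supplies stamps, synchronisation order and an \<open>L\<close>-execution for them, together with a
  map \<open>g\<close> back to subevents of \<open>X\<close>. The execution of the source program keeps the client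
  subevents, takes the call subevents from local soundness, and pulls happens-before back from
  \<open>X\<close> along \<open>g\<close>; it is then \<open>\<Lambda> \<union> {L}\<close>-consistent.
\<close>

lemma fst_seqc [simp]: "fst (seqc G1 G2) = fst G1 \<union> fst G2"
  by (simp add: seqc_def)

lemma snd_seqc [simp]: "snd (seqc G1 G2) = snd G1 \<union> snd G2 \<union> fst G1 \<times> fst G2"
  by (simp add: seqc_def)

lemma seq_list_Nil [simp]: "seq_list [] = empty_G"
  by (simp add: seq_list_def)

lemma seq_list_Cons [simp]: "seq_list (G # Gs) = seqc G (seq_list Gs)"
  by (simp add: seq_list_def)

lemma fst_seq_list [simp]: "fst (seq_list Gs) = (\<Union>G\<in>set Gs. fst G)"
  by (induction Gs) (auto simp: empty_G_def)

definition disjoint_parts :: "('v, 'm) pexec list \<Rightarrow> bool" where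
  "disjoint_parts Gs \<longleftrightarrow> (\<forall>i<length Gs. \<forall>j<length Gs. i \<noteq> j \<longrightarrow> fst (Gs ! i) \<inter> fst (Gs ! j) = {})"

lemma disjoint_parts_Nil [simp]: "disjoint_parts []"
  by (simp add: disjoint_parts_def)

lemma disjoint_parts_Cons:
  "disjoint_parts (G # Gs) \<longleftrightarrow> fst G \<inter> fst (seq_list Gs) = {} \<and> disjoint_parts Gs"
proof
  assume parts: "disjoint_parts (G # Gs)"
  have "fst G \<inter> fst H = {}" if "H \<in> set Gs" for H
    using parts that unfolding disjoint_parts_def in_set_conv_nth
    by (metis Suc_less_eq length_Cons nat.distinct(1) nth_Cons_0 nth_Cons_Suc zero_less_Suc)
  moreover have "disjoint_parts Gs"
    using parts unfolding disjoint_parts_def by (metis Suc_less_eq length_Cons nat.inject nth_Cons_Suc)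
  ultimately show "fst G \<inter> fst (seq_list Gs) = {} \<and> disjoint_parts Gs"
    by auto
next
  assume tail: "fst G \<inter> fst (seq_list Gs) = {} \<and> disjoint_parts Gs"
  show "disjoint_parts (G # Gs)"
    unfolding disjoint_parts_def
  proof (intro allI impI)
    fix i j assume "i < length (G # Gs)" "j < length (G # Gs)" "i \<noteq> j"
    then show "fst ((G # Gs) ! i) \<inter> fst ((G # Gs) ! j) = {}"
      using tail nth_mem unfolding disjoint_parts_def by (cases i; cases j) fastforce+
  qed
qed

definition thread_exec :: "nat \<Rightarrow> ('v, 'm) pexec \<Rightarrow> bool" where
  "thread_exec t G \<longleftrightarrow> snd G \<subseteq> fst G \<times> fst G \<and> finite (fst G) \<and> (\<forall>e\<in>fst G. thread e = t)"

lemma thread_exec_empty_G [simp]: "thread_exec t empty_G"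
  by (simp add: thread_exec_def empty_G_def)

lemma thread_exec_seqc: "thread_exec t G1 \<Longrightarrow> thread_exec t G2 \<Longrightarrow> thread_exec t (seqc G1 G2)"
  by (auto simp: thread_exec_def)

lemma thread_exec_seq_list: "\<forall>G\<in>set Gs. thread_exec t G \<Longrightarrow> thread_exec t (seq_list Gs)"
  by (induction Gs) (auto intro: thread_exec_seqc)

lemma sem_thread_exec: "(r, G) \<in> sem t p \<Longrightarrow> thread_exec t G"
proof (induction p arbitrary: r G)
  case (Call m vs)
  then show ?case by (auto simp: thread_exec_def thread_def)
next
  case (Let p g)
  from Let.prems consider (seq) G1 G2 v where "G = seqc G1 G2" "((v, 0), G1) \<in> sem t p"
      "(r, G2) \<in> sem t (g v)"
    | (break) "(r, G) \<in> sem t p"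
    by auto
  then show ?case by cases (use Let.IH in \<open>blast intro: thread_exec_seqc\<close>)+
next
  case (Loop p)
  from Loop.prems obtain v k Gs j where G: "G = seq_list Gs" "length Gs = Suc j"
    "\<forall>i<j. \<exists>u. ((u, 0), Gs ! i) \<in> sem t p" "((v, Suc k), Gs ! j) \<in> sem t p"
    by auto
  then have "\<forall>i<length Gs. \<exists>r'. (r', Gs ! i) \<in> sem t p"
    by (metis less_SucE)
  then show ?case unfolding G(1) by (metis Loop.IH in_set_conv_nth thread_exec_seq_list)
qed simp_all

lemma thread_orders_iff:
  assumes dom: "R \<subseteq> E \<times> E" and same: "\<forall>(x, y)\<in>R. thread x = thread y"
  shows "(\<forall>t. let Et = {e \<in> E. thread e = t}; r = R \<inter> Et \<times> Et in trans r \<and> irrefl r \<and> total_on Et r)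
    \<longleftrightarrow> trans R \<and> irrefl R \<and> (\<forall>x\<in>E. \<forall>y\<in>E. thread x = thread y \<longrightarrow> x \<noteq> y \<longrightarrow> (x, y) \<in> R \<or> (y, x) \<in> R)"
    (is "?per_thread \<longleftrightarrow> ?order")
proof
  define Et where "Et t = {e \<in> E. thread e = t}" for t
  assume ?per_thread
  then have trans_t: "trans (R \<inter> Et t \<times> Et t)" and irrefl_t: "irrefl (R \<inter> Et t \<times> Et t)"
    and total_t: "total_on (Et t) (R \<inter> Et t \<times> Et t)" for t
    unfolding Et_def Let_def by simp_all
  have in_thread: "(x, y) \<in> R \<inter> Et (thread x) \<times> Et (thread y)" if "(x, y) \<in> R" for x y
    using that dom unfolding Et_def by auto
  have same_xy: "thread x = thread y" if "(x, y) \<in> R" for x y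
    using that same by auto
  have "trans R"
  proof (rule transI)
    fix x y z assume xy: "(x, y) \<in> R" and yz: "(y, z) \<in> R"
    with in_thread same_xy have "(x, y) \<in> R \<inter> Et (thread x) \<times> Et (thread x)"
        "(y, z) \<in> R \<inter> Et (thread x) \<times> Et (thread x)"
      by metis+
    then show "(x, z) \<in> R" using transD[OF trans_t] by blast
  qed
  moreover have "irrefl R"
    using in_thread irrefl_t unfolding irrefl_def by blast
  moreover have "\<forall>x\<in>E. \<forall>y\<in>E. thread x = thread y \<longrightarrow> x \<noteq> y \<longrightarrow> (x, y) \<in> R \<or> (y, x) \<in> R"
    using total_t unfolding total_on_def Et_def by blast
  ultimately show ?order by blast
next
  assume order: ?order
  show ?per_thread
  proof (intro allI, unfold Let_def, intro conjI)
    fix t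
    show "trans (R \<inter> {e \<in> E. thread e = t} \<times> {e \<in> E. thread e = t})"
      using order by (simp add: trans_Restr)
    show "irrefl (R \<inter> {e \<in> E. thread e = t} \<times> {e \<in> E. thread e = t})"
      using order by (simp add: irrefl_def)
    show "total_on {e \<in> E. thread e = t} (R \<inter> {e \<in> E. thread e = t} \<times> {e \<in> E. thread e = t})"
      using order unfolding total_on_def by auto
  qed
qed

lemma plain_exec_iff:
  "plain_exec T (E, R) \<longleftrightarrow> (\<forall>e\<in>E. thread e \<in> {1..T}) \<and> R \<subseteq> E \<times> E \<and>
     (\<forall>(x, y)\<in>R. thread x = thread y) \<and> trans R \<and> irrefl R \<and>
     (\<forall>x\<in>E. \<forall>y\<in>E. thread x = thread y \<longrightarrow> x \<noteq> y \<longrightarrow> (x, y) \<in> R \<or> (y, x) \<in> R)"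
  unfolding plain_exec_def fst_conv snd_conv using thread_orders_iff[of R E] by blast

lemma plain_exec_restrict: "plain_exec T (E, R) \<Longrightarrow> plain_exec T (E \<inter> A, R \<inter> A \<times> A)"
  unfolding plain_exec_iff by (auto simp: trans_Restr irrefl_def)

section \<open>Collapsing events\<close>

definition collapse_rel :: "('a \<Rightarrow> 'b) \<Rightarrow> ('a \<times> 'a) set \<Rightarrow> ('b \<times> 'b) set" where
  "collapse_rel f R = {(f x, f y) | x y. (x, y) \<in> R \<and> f x \<noteq> f y}"

definition collapse :: "('a \<Rightarrow> 'b) \<Rightarrow> 'a set \<times> ('a \<times> 'a) set \<Rightarrow> 'b set \<times> ('b \<times> 'b) set" where
  "collapse f G = (f ` fst G, collapse_rel f (snd G))"

text \<open>
  In a \<open>coherent\<close> collapse, program order between two distinct classes of \<open>f\<close> relates either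
  all or no pairs of their elements. This makes the collapsed order transitive and lets the
  original order be read back from it.
\<close>

definition coherent :: "('a \<Rightarrow> 'b) \<Rightarrow> 'a set \<times> ('a \<times> 'a) set \<Rightarrow> bool" where
  "coherent f G \<longleftrightarrow> (\<forall>(x, y)\<in>snd G. f x \<noteq> f y \<longrightarrow>
     (\<forall>x'\<in>fst G. \<forall>y'\<in>fst G. f x' = f x \<longrightarrow> f y' = f y \<longrightarrow> (x', y') \<in> snd G))"

lemma coherentI:
  "(\<And>x y x' y'. (x, y) \<in> snd G \<Longrightarrow> f x \<noteq> f y \<Longrightarrow> x' \<in> fst G \<Longrightarrow> y' \<in> fst G \<Longrightarrow>
      f x' = f x \<Longrightarrow> f y' = f y \<Longrightarrow> (x', y') \<in> snd G) \<Longrightarrow> coherent f G"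
  unfolding coherent_def by blast

lemma coherentD:
  "coherent f G \<Longrightarrow> (x, y) \<in> snd G \<Longrightarrow> f x \<noteq> f y \<Longrightarrow> x' \<in> fst G \<Longrightarrow> y' \<in> fst G \<Longrightarrow>
     f x' = f x \<Longrightarrow> f y' = f y \<Longrightarrow> (x', y') \<in> snd G"
  unfolding coherent_def by blast

lemma collapse_relI: "(x, y) \<in> R \<Longrightarrow> f x \<noteq> f y \<Longrightarrow> (f x, f y) \<in> collapse_rel f R"
  unfolding collapse_rel_def by blast

lemma collapse_relE:
  assumes "(a, b) \<in> collapse_rel f R"
  obtains x y where "a = f x" "b = f y" "(x, y) \<in> R" "f x \<noteq> f y"
  using assms unfolding collapse_rel_def by blast

lemma collapse_rel_UN: "collapse_rel f (\<Union>i\<in>S. R i) = (\<Union>i\<in>S. collapse_rel f (R i))"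
  unfolding collapse_rel_def by blast

lemma collapse_rel_coherentD:
  assumes "coherent f (E, R)" "x \<in> E" "y \<in> E" "(f x, f y) \<in> collapse_rel f R"
  shows "(x, y) \<in> R"
  using assms unfolding coherent_def collapse_rel_def by fastforce

lemma trans_collapse_rel:
  assumes coh: "coherent f (E, R)" and dom: "R \<subseteq> E \<times> E" and "trans R" "irrefl R"
  shows "trans (collapse_rel f R)"
proof (rule transI)
  fix a b c assume ab: "(a, b) \<in> collapse_rel f R" and bc: "(b, c) \<in> collapse_rel f R"
  have "a \<in> f ` E" "b \<in> f ` E" "c \<in> f ` E"
    using ab bc dom by (auto elim!: collapse_relE)
  then obtain x y z where xyz: "x \<in> E" "y \<in> E" "z \<in> E" "a = f x" "b = f y" "c = f z"
    by blast
  then have "(x, y) \<in> R" "(y, z) \<in> R" using collapse_rel_coherentD[OF coh] ab bc by auto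
  then have "(x, z) \<in> R" using transD[OF \<open>trans R\<close>] by blast
  moreover have "f x \<noteq> f z"
  proof
    assume "f x = f z"
    then have "(y, x) \<in> R" using collapse_rel_coherentD[OF coh] xyz bc by auto
    with \<open>(x, y) \<in> R\<close> \<open>trans R\<close> \<open>irrefl R\<close> show False
      by (meson irrefl_def transD)
  qed
  ultimately show "(a, c) \<in> collapse_rel f R" using xyz by (simp add: collapse_relI)
qed

lemma plain_exec_collapse:
  assumes pe: "plain_exec T (E, R)" and thread_f: "\<forall>x\<in>E. thread (f x) = thread x"
    and coh: "coherent f (E, R)"
  shows "plain_exec T (f ` E, collapse_rel f R)"
proof -
  from pe have threads: "\<forall>e\<in>E. thread e \<in> {1..T}" and dom: "R \<subseteq> E \<times> E"
    and same: "\<And>x y. (x, y) \<in> R \<Longrightarrow> thread x = thread y" and "trans R" "irrefl R"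
    and total: "\<And>x y. x \<in> E \<Longrightarrow> y \<in> E \<Longrightarrow> thread x = thread y \<Longrightarrow> x \<noteq> y \<Longrightarrow> (x, y) \<in> R \<or> (y, x) \<in> R"
    unfolding plain_exec_iff by auto
  have "collapse_rel f R \<subseteq> f ` E \<times> f ` E"
    using dom by (auto elim!: collapse_relE)
  moreover have "thread a = thread b" if "(a, b) \<in> collapse_rel f R" for a b
  proof -
    from that obtain x y where "a = f x" "b = f y" "(x, y) \<in> R" by (rule collapse_relE)
    moreover from \<open>(x, y) \<in> R\<close> dom have "x \<in> E" "y \<in> E" by auto
    ultimately show ?thesis using same thread_f by simp
  qed
  moreover have "(a, b) \<in> collapse_rel f R \<or> (b, a) \<in> collapse_rel f R"
    if "a \<in> f ` E" "b \<in> f ` E" "thread a = thread b" "a \<noteq> b" for a b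
  proof -
    from that(1,2) obtain x y where "x \<in> E" "y \<in> E" "a = f x" "b = f y" by blast
    moreover from that(3,4) thread_f have "thread x = thread y" "x \<noteq> y"
      using \<open>x \<in> E\<close> \<open>y \<in> E\<close> \<open>a = f x\<close> \<open>b = f y\<close> by auto
    ultimately have "(x, y) \<in> R \<or> (y, x) \<in> R" using total by blast
    with \<open>a = f x\<close> \<open>b = f y\<close> \<open>a \<noteq> b\<close> show ?thesis by (auto intro: collapse_relI)
  qed
  moreover have "irrefl (collapse_rel f R)"
    by (auto simp: irrefl_def elim: collapse_relE)
  ultimately show ?thesis
    unfolding plain_exec_iff using threads thread_f trans_collapse_rel[OF coh dom \<open>trans R\<close> \<open>irrefl R\<close>]
    by auto
qed

lemma collapse_rel_Un: "collapse_rel f (R \<union> S) = collapse_rel f R \<union> collapse_rel f S"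
  unfolding collapse_rel_def by blast

lemma collapse_rel_Times:
  "\<forall>x\<in>A. \<forall>y\<in>B. f x \<noteq> f y \<Longrightarrow> collapse_rel f (A \<times> B) = f ` A \<times> f ` B"
  unfolding collapse_rel_def by blast

lemma collapse_seqc:
  "\<forall>x\<in>fst G1. \<forall>y\<in>fst G2. f x \<noteq> f y \<Longrightarrow>
     collapse f (seqc G1 G2) = seqc (collapse f G1) (collapse f G2)"
  unfolding collapse_def seqc_def by (simp add: collapse_rel_Un collapse_rel_Times image_Un)

lemma coherent_seqc:
  assumes coh: "coherent f G1" "coherent f G2"
    and dom: "snd G1 \<subseteq> fst G1 \<times> fst G1" "snd G2 \<subseteq> fst G2 \<times> fst G2"
    and sep: "\<forall>x\<in>fst G1. \<forall>y\<in>fst G2. f x \<noteq> f y"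
  shows "coherent f (seqc G1 G2)"
proof (rule coherentI)
  fix x y x' y'
  assume xy: "(x, y) \<in> snd (seqc G1 G2)" "f x \<noteq> f y"
    and x'y': "x' \<in> fst (seqc G1 G2)" "y' \<in> fst (seqc G1 G2)" "f x' = f x" "f y' = f y"
  have in1: "u' \<in> fst G1" if "u \<in> fst G1" "u' \<in> fst (seqc G1 G2)" "f u' = f u" for u u'
    using that sep[rule_format, of u u'] by auto
  have in2: "u' \<in> fst G2" if "u \<in> fst G2" "u' \<in> fst (seqc G1 G2)" "f u' = f u" for u u'
    using that sep[rule_format, of u' u] by auto
  from xy(1) consider "(x, y) \<in> snd G1" | "(x, y) \<in> snd G2" | "x \<in> fst G1" "y \<in> fst G2"
    unfolding snd_seqc by blast
  then show "(x', y') \<in> snd (seqc G1 G2)"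
  proof cases
    case 1
    from subsetD[OF dom(1) 1] have "x' \<in> fst G1" "y' \<in> fst G1"
      using in1 x'y' by blast+
    then have "(x', y') \<in> snd G1" using coherentD[OF coh(1) 1 xy(2)] x'y'(3,4) by blast
    then show ?thesis by simp
  next
    case 2
    from subsetD[OF dom(2) 2] have "x' \<in> fst G2" "y' \<in> fst G2"
      using in2 x'y' by blast+
    then have "(x', y') \<in> snd G2" using coherentD[OF coh(2) 2 xy(2)] x'y'(3,4) by blast
    then show ?thesis by simp
  next
    case 3
    then have "x' \<in> fst G1" "y' \<in> fst G2" using in1 in2 x'y' by blast+
    then show ?thesis by simp
  qed
qed

section \<open>Collapsing implementation runs within a thread\<close>

(* A block (A, l) consists of the events A of one run of the implementation of the call labelled l. *)
type_synonym ('v, 'm) block = "('v, 'm) event set \<times> ('v, 'm) lab"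

definition impl_blocks ::
  "nat \<Rightarrow> ('v, 'm) impl \<Rightarrow> ('v, 'm, 's) library \<Rightarrow> ('v, 'm) pexec \<Rightarrow> ('v, 'm) block set \<Rightarrow> bool" where
  "impl_blocks t I L G Bs \<longleftrightarrow>
     (\<forall>(A, m, vs, v)\<in>Bs. A \<noteq> {} \<and> A \<subseteq> fst G \<and> m \<in> lM L \<and>
        ((v, 0), (A, snd G \<inter> A \<times> A)) \<in> sem t (I t m vs)) \<and>
     (\<forall>b\<in>Bs. \<forall>b'\<in>Bs. b \<noteq> b' \<longrightarrow> fst b \<inter> fst b' = {})"

definition collapses ::
  "nat \<Rightarrow> ('v, 'm) pexec \<Rightarrow> ('v, 'm) block set \<Rightarrow> (('v, 'm) event \<Rightarrow> ('v, 'm) event) \<Rightarrow> bool" where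
  "collapses t G Bs f \<longleftrightarrow>
     (\<forall>(A, l)\<in>Bs. \<exists>\<iota>. \<forall>x\<in>A. f x = (t, \<iota>, l)) \<and>
     (\<forall>x\<in>fst G. (\<forall>b\<in>Bs. x \<notin> fst b) \<longrightarrow> f x = x) \<and>
     (\<forall>x\<in>fst G. \<forall>y\<in>fst G. f x = f y \<longrightarrow> x = y \<or> (\<exists>b\<in>Bs. x \<in> fst b \<and> y \<in> fst b))"

(* The blocks are fixed before the collapsing map, so that one map can serve all threads at once. *)
definition collapsible ::
  "nat \<Rightarrow> ('v, 'm) impl \<Rightarrow> ('v, 'm, 's) library \<Rightarrow> ('v, 'm) pexec \<Rightarrow> (('v, 'm) pexec \<Rightarrow> bool) \<Rightarrow> bool" where
  "collapsible t I L G P \<longleftrightarrow>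
     (\<exists>Bs. impl_blocks t I L G Bs \<and> (\<forall>f. collapses t G Bs f \<longrightarrow> P (collapse f G) \<and> coherent f G))"

lemma impl_blocksI:
  assumes "\<And>A m vs v. (A, m, vs, v) \<in> Bs \<Longrightarrow> A \<noteq> {} \<and> A \<subseteq> fst G \<and> m \<in> lM L \<and>
             ((v, 0), (A, snd G \<inter> A \<times> A)) \<in> sem t (I t m vs)"
    and "\<And>b b'. b \<in> Bs \<Longrightarrow> b' \<in> Bs \<Longrightarrow> b \<noteq> b' \<Longrightarrow> fst b \<inter> fst b' = {}"
  shows "impl_blocks t I L G Bs"
  unfolding impl_blocks_def
proof (intro conjI)
  show "\<forall>(A, m, vs, v)\<in>Bs. A \<noteq> {} \<and> A \<subseteq> fst G \<and> m \<in> lM L \<and>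
      ((v, 0), (A, snd G \<inter> A \<times> A)) \<in> sem t (I t m vs)"
    using assms(1) by blast
  show "\<forall>b\<in>Bs. \<forall>b'\<in>Bs. b \<noteq> b' \<longrightarrow> fst b \<inter> fst b' = {}"
    using assms(2) by blast
qed

lemma impl_blocksD:
  assumes "impl_blocks t I L G Bs" "(A, m, vs, v) \<in> Bs"
  shows "A \<noteq> {}" "A \<subseteq> fst G" "m \<in> lM L" "((v, 0), (A, snd G \<inter> A \<times> A)) \<in> sem t (I t m vs)"
  using assms unfolding impl_blocks_def by fastforce+

lemma impl_blocks_subset: "impl_blocks t I L G Bs \<Longrightarrow> b \<in> Bs \<Longrightarrow> fst b \<subseteq> fst G"
  by (metis impl_blocksD(2) prod.collapse)

lemma impl_blocks_disjoint:
  "impl_blocks t I L G Bs \<Longrightarrow> b \<in> Bs \<Longrightarrow> b' \<in> Bs \<Longrightarrow> x \<in> fst b \<Longrightarrow> x \<in> fst b' \<Longrightarrow> b = b'"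
  unfolding impl_blocks_def by blast

lemma impl_blocks_nonempty: "impl_blocks t I L G Bs \<Longrightarrow> b \<in> Bs \<Longrightarrow> fst b \<noteq> {}"
  by (metis impl_blocksD(1) prod.collapse)

lemma impl_blocks_finite:
  assumes "impl_blocks t I L G Bs" "finite (fst G)"
  shows "finite Bs"
proof -
  have "inj_on fst Bs"
  proof (rule inj_onI)
    fix b b' assume b: "b \<in> Bs" "b' \<in> Bs" "fst b = fst b'"
    with impl_blocks_nonempty[OF assms(1) b(1)] obtain x where "x \<in> fst b" "x \<in> fst b'" by auto
    with b(1,2) show "b = b'" by (rule impl_blocks_disjoint[OF assms(1)])
  qed
  moreover have "fst ` Bs \<subseteq> Pow (fst G)" using impl_blocks_subset[OF assms(1)] by blast
  ultimately show ?thesis using assms(2) by (meson finite_Pow_iff finite_imageD finite_subset)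
qed

lemma collapses_eqD:
  "collapses t G Bs f \<Longrightarrow> x \<in> fst G \<Longrightarrow> y \<in> fst G \<Longrightarrow> f x = f y \<Longrightarrow>
     x = y \<or> (\<exists>b\<in>Bs. x \<in> fst b \<and> y \<in> fst b)"
  unfolding collapses_def by blast

lemma collapses_restrict:
  assumes "collapses t G Bs f" "fst G' \<subseteq> fst G" "Bs' \<subseteq> Bs" "\<forall>b\<in>Bs - Bs'. fst b \<inter> fst G' = {}"
  shows "collapses t G' Bs' f"
  using assms unfolding collapses_def by blast

lemma collapsible_mono: "collapsible t I L G P \<Longrightarrow> (\<And>G'. P G' \<Longrightarrow> Q G') \<Longrightarrow> collapsible t I L G Q"
  unfolding collapsible_def by blast

lemma collapsible_edgeless:
  assumes "snd G = {}" "P G"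
  shows "collapsible t I L G P"
  unfolding collapsible_def
proof (intro exI conjI allI impI)
  show "impl_blocks t I L G {}" by (simp add: impl_blocks_def)
  fix f assume "collapses t G {} f"
  then have "f ` fst G = fst G" by (simp add: collapses_def)
  with assms(1) have "collapse f G = G" by (simp add: collapse_def collapse_rel_def prod_eq_iff)
  with assms(2) show "P (collapse f G)" by simp
  show "coherent f G" using assms(1) by (simp add: coherent_def)
qed

lemma collapsible_impl_run:
  assumes run: "((v, 0), G) \<in> sem t (I t m vs)" and "m \<in> lM L" "fst G \<noteq> {}"
  shows "collapsible t I L G (\<lambda>G'. ((v, 0), G') \<in> sem t (Call m vs))"
  unfolding collapsible_def
proof (intro exI conjI allI impI)
  have "snd G \<subseteq> fst G \<times> fst G" using sem_thread_exec[OF run] by (simp add: thread_exec_def)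
  then show "impl_blocks t I L G {(fst G, m, vs, v)}"
    using assms by (simp add: impl_blocks_def Int_absorb2)
  fix f assume "collapses t G {(fst G, m, vs, v)} f"
  then obtain \<iota> where f: "\<forall>x\<in>fst G. f x = (t, \<iota>, m, vs, v)" by (auto simp: collapses_def)
  then have "f ` fst G = {(t, \<iota>, m, vs, v)}" using \<open>fst G \<noteq> {}\<close> by auto
  moreover have "collapse_rel f (snd G) = {}"
    using f \<open>snd G \<subseteq> fst G \<times> fst G\<close> unfolding collapse_rel_def by fastforce
  ultimately have "collapse f G = ({(t, \<iota>, m, vs, v)}, {})" by (simp add: collapse_def)
  then show "((v, 0), collapse f G) \<in> sem t (Call m vs)" by simp
  show "coherent f G"
  proof (rule coherentI)
    fix x y assume "(x, y) \<in> snd G" "f x \<noteq> f y"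
    with f \<open>snd G \<subseteq> fst G \<times> fst G\<close> show "(x', y') \<in> snd G" for x' y' by auto
  qed
qed

lemma snd_seqc_Restr_left:
  "snd G2 \<subseteq> fst G2 \<times> fst G2 \<Longrightarrow> A \<inter> fst G2 = {} \<Longrightarrow> snd (seqc G1 G2) \<inter> A \<times> A = snd G1 \<inter> A \<times> A"
  by auto

lemma snd_seqc_Restr_right:
  "snd G1 \<subseteq> fst G1 \<times> fst G1 \<Longrightarrow> A \<inter> fst G1 = {} \<Longrightarrow> snd (seqc G1 G2) \<inter> A \<times> A = snd G2 \<inter> A \<times> A"
  by auto

lemma impl_blocks_seqc:
  assumes G: "thread_exec t G1" "thread_exec t G2" "fst G1 \<inter> fst G2 = {}"
    and B1: "impl_blocks t I L G1 Bs1" and B2: "impl_blocks t I L G2 Bs2"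
  shows "impl_blocks t I L (seqc G1 G2) (Bs1 \<union> Bs2)"
proof (rule impl_blocksI)
  fix A m vs v assume "(A, m, vs, v) \<in> Bs1 \<union> Bs2"
  then have "A \<noteq> {} \<and> A \<subseteq> fst (seqc G1 G2) \<and> m \<in> lM L \<and>
      ((v, 0), (A, snd (seqc G1 G2) \<inter> A \<times> A)) \<in> sem t (I t m vs)"
  proof
    assume b: "(A, m, vs, v) \<in> Bs1"
    note blk = impl_blocksD[OF B1 b]
    from blk(2) G(3) have "A \<inter> fst G2 = {}" by blast
    with G(2) have eq: "snd (seqc G1 G2) \<inter> A \<times> A = snd G1 \<inter> A \<times> A"
      by (intro snd_seqc_Restr_left) (simp_all add: thread_exec_def)
    have "((v, 0), (A, snd (seqc G1 G2) \<inter> A \<times> A)) \<in> sem t (I t m vs)"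
      unfolding eq by (rule blk(4))
    moreover have "A \<subseteq> fst (seqc G1 G2)" using blk(2) by auto
    ultimately show ?thesis using blk(1,3) by blast
  next
    assume b: "(A, m, vs, v) \<in> Bs2"
    note blk = impl_blocksD[OF B2 b]
    from blk(2) G(3) have "A \<inter> fst G1 = {}" by blast
    with G(1) have eq: "snd (seqc G1 G2) \<inter> A \<times> A = snd G2 \<inter> A \<times> A"
      by (intro snd_seqc_Restr_right) (simp_all add: thread_exec_def)
    have "((v, 0), (A, snd (seqc G1 G2) \<inter> A \<times> A)) \<in> sem t (I t m vs)"
      unfolding eq by (rule blk(4))
    moreover have "A \<subseteq> fst (seqc G1 G2)" using blk(2) by auto
    ultimately show ?thesis using blk(1,3) by blast
  qed
  then show "A \<noteq> {} \<and> A \<subseteq> fst (seqc G1 G2) \<and> m \<in> lM L \<and>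
      ((v, 0), (A, snd (seqc G1 G2) \<inter> A \<times> A)) \<in> sem t (I t m vs)" .
next
  fix b b' assume "b \<in> Bs1 \<union> Bs2" "b' \<in> Bs1 \<union> Bs2" "b \<noteq> b'"
  with G(3) impl_blocks_subset[OF B1] impl_blocks_subset[OF B2]
    impl_blocks_disjoint[OF B1] impl_blocks_disjoint[OF B2]
  show "fst b \<inter> fst b' = {}" by blast
qed

lemma collapsible_seqc:
  assumes G1: "thread_exec t G1" "collapsible t I L G1 P1"
    and G2: "thread_exec t G2" "collapsible t I L G2 P2"
    and disj: "fst G1 \<inter> fst G2 = {}"
  shows "collapsible t I L (seqc G1 G2)
           (\<lambda>G'. \<exists>G1' G2'. G' = seqc G1' G2' \<and> P1 G1' \<and> P2 G2' \<and> fst G1' \<inter> fst G2' = {})"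
proof -
  from G1(2) obtain Bs1 where B1: "impl_blocks t I L G1 Bs1"
    and P1: "\<And>f. collapses t G1 Bs1 f \<Longrightarrow> P1 (collapse f G1) \<and> coherent f G1"
    unfolding collapsible_def by blast
  from G2(2) obtain Bs2 where B2: "impl_blocks t I L G2 Bs2"
    and P2: "\<And>f. collapses t G2 Bs2 f \<Longrightarrow> P2 (collapse f G2) \<and> coherent f G2"
    unfolding collapsible_def by blast
  note sub1 = impl_blocks_subset[OF B1] and sub2 = impl_blocks_subset[OF B2]
  show ?thesis
    unfolding collapsible_def
  proof (rule exI[of _ "Bs1 \<union> Bs2"], intro conjI allI impI)
    show "impl_blocks t I L (seqc G1 G2) (Bs1 \<union> Bs2)"
      using G1(1) G2(1) disj B1 B2 by (rule impl_blocks_seqc)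
    fix f assume f: "collapses t (seqc G1 G2) (Bs1 \<union> Bs2) f"
    have "\<forall>b\<in>(Bs1 \<union> Bs2) - Bs1. fst b \<inter> fst G1 = {}" using sub2 disj by blast
    then have f1: "collapses t G1 Bs1 f" using collapses_restrict[OF f] by simp
    have "\<forall>b\<in>(Bs1 \<union> Bs2) - Bs2. fst b \<inter> fst G2 = {}" using sub1 disj by blast
    then have f2: "collapses t G2 Bs2 f" using collapses_restrict[OF f] by simp
    have sep: "\<forall>x\<in>fst G1. \<forall>y\<in>fst G2. f x \<noteq> f y"
    proof (intro ballI notI)
      fix x y assume "x \<in> fst G1" "y \<in> fst G2" "f x = f y"
      then have "x = y \<or> (\<exists>b\<in>Bs1 \<union> Bs2. x \<in> fst b \<and> y \<in> fst b)"
        by (intro collapses_eqD[OF f]) simp_all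
      with \<open>x \<in> fst G1\<close> \<open>y \<in> fst G2\<close> disj sub1 sub2 show False by blast
    qed
    then have "fst (collapse f G1) \<inter> fst (collapse f G2) = {}"
      unfolding collapse_def fst_conv by blast
    with collapse_seqc[OF sep] P1[OF f1] P2[OF f2]
    show "\<exists>G1' G2'. collapse f (seqc G1 G2) = seqc G1' G2' \<and> P1 G1' \<and> P2 G2' \<and> fst G1' \<inter> fst G2' = {}"
      by blast
    show "coherent f (seqc G1 G2)"
      using P1[OF f1] P2[OF f2] G1(1) G2(1) sep by (intro coherent_seqc) (simp_all add: thread_exec_def)
  qed
qed

lemma collapsible_seq_list:
  assumes "\<forall>i<length Gs. thread_exec t (Gs ! i) \<and> collapsible t I L (Gs ! i) (P i)"
    and "disjoint_parts Gs"
  shows "collapsible t I L (seq_list Gs)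
           (\<lambda>G'. \<exists>Gs'. G' = seq_list Gs' \<and> length Gs' = length Gs \<and> (\<forall>i<length Gs. P i (Gs' ! i)) \<and>
                 disjoint_parts Gs')"
  using assms
proof (induction Gs arbitrary: P)
  case Nil
  have "snd (seq_list []) = {}" by (simp add: empty_G_def)
  then show ?case by (rule collapsible_edgeless) (intro exI[of _ "[]"], simp)
next
  case (Cons G Gs)
  from Cons.prems(1) have G: "thread_exec t G" "collapsible t I L G (P 0)"
    and parts: "\<forall>i<length Gs. thread_exec t (Gs ! i) \<and> collapsible t I L (Gs ! i) (P (Suc i))"
    unfolding length_Cons All_less_Suc2 by simp_all
  from Cons.prems(2) have disj: "fst G \<inter> fst (seq_list Gs) = {}" "disjoint_parts Gs"
    by (simp_all add: disjoint_parts_Cons)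
  have tail: "collapsible t I L (seq_list Gs)
      (\<lambda>G'. \<exists>Gs'. G' = seq_list Gs' \<and> length Gs' = length Gs \<and> (\<forall>i<length Gs. P (Suc i) (Gs' ! i)) \<and>
            disjoint_parts Gs')"
    using parts disj(2) by (rule Cons.IH)
  have "\<forall>H\<in>set Gs. thread_exec t H" using parts by (simp add: all_set_conv_all_nth)
  then have "thread_exec t (seq_list Gs)" by (rule thread_exec_seq_list)
  from collapsible_seqc[OF G this tail disj(1)]
  show ?case
    unfolding seq_list_Cons
  proof (rule collapsible_mono)
    fix G' assume "\<exists>G1' G2'. G' = seqc G1' G2' \<and> P 0 G1' \<and>
      (\<exists>Gs'. G2' = seq_list Gs' \<and> length Gs' = length Gs \<and> (\<forall>i<length Gs. P (Suc i) (Gs' ! i)) \<and>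
         disjoint_parts Gs') \<and> fst G1' \<inter> fst G2' = {}"
    then obtain G1' Gs' where G': "G' = seqc G1' (seq_list Gs')" "P 0 G1'" "length Gs' = length Gs"
      "\<forall>i<length Gs. P (Suc i) (Gs' ! i)" "disjoint_parts Gs'" "fst G1' \<inter> fst (seq_list Gs') = {}"
      by blast
    have "\<forall>i<length (G # Gs). P i ((G1' # Gs') ! i)"
      using G'(2,4) unfolding length_Cons All_less_Suc2 by simp
    moreover have "disjoint_parts (G1' # Gs')" using G'(5,6) by (simp add: disjoint_parts_Cons)
    ultimately show "\<exists>Gs'. G' = seq_list Gs' \<and> length Gs' = length (G # Gs) \<and>
      (\<forall>i<length (G # Gs). P i (Gs' ! i)) \<and> disjoint_parts Gs'"
      using G'(1,3) by (intro exI[of _ "G1' # Gs'"]) simp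
  qed
qed

lemma collapsible_Call:
  assumes wd: "well_defined T I L \<Lambda>" and t: "t \<in> {1..T}"
    and run: "(r, G) \<in> sem t (transl I L t (Call m vs))"
  shows "collapsible t I L G (\<lambda>G'. (r, G') \<in> sem t (Call m vs))"
proof (cases "m \<in> lM L")
  case True
  with run have run_I: "(r, G) \<in> sem t (I t m vs)" by simp
  from wd t True have no_break: "\<forall>v k G. ((v, Suc k), G) \<notin> sem t (I t m vs)"
    and nonempty: "\<forall>v G. ((v, 0), G) \<in> sem t (I t m vs) \<longrightarrow> fst G \<noteq> {}"
    unfolding well_defined_def by blast+
  obtain v k where r: "r = (v, k)" by (cases r)
  have "k = 0"
  proof (rule ccontr)
    assume "k \<noteq> 0"
    then obtain k' where "k = Suc k'" by (cases k) auto
    with run_I r no_break show False by blast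
  qed
  with run_I r have run': "((v, 0), G) \<in> sem t (I t m vs)" by simp
  with nonempty have "fst G \<noteq> {}" by blast
  from collapsible_impl_run[of v G t I m vs L, OF run' True this] show ?thesis unfolding r \<open>k = 0\<close> .
next
  case False
  with run have "(r, G) \<in> sem t (Call m vs)" "snd G = {}" by auto
  then show ?thesis by (intro collapsible_edgeless)
qed

lemma collapsible_Let:
  assumes IH1: "\<And>r G. (r, G) \<in> sem t p' \<Longrightarrow> collapsible t I L G (\<lambda>G'. (r, G') \<in> sem t p)"
    and IH2: "\<And>v r G. (r, G) \<in> sem t (f' v) \<Longrightarrow> collapsible t I L G (\<lambda>G'. (r, G') \<in> sem t (f v))"
    and run: "(r, G) \<in> sem t (prog.Let p' f')"
  shows "collapsible t I L G (\<lambda>G'. (r, G') \<in> sem t (prog.Let p f))"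
proof -
  from run consider (seq) G1 G2 v where "G = seqc G1 G2" "((v, 0), G1) \<in> sem t p'"
      "(r, G2) \<in> sem t (f' v)" "fst G1 \<inter> fst G2 = {}"
    | (break) "(r, G) \<in> sem t p'" "snd r \<noteq> 0"
    by auto
  then show ?thesis
  proof cases
    case seq
    have "collapsible t I L (seqc G1 G2) (\<lambda>G'. \<exists>G1' G2'. G' = seqc G1' G2' \<and> ((v, 0), G1') \<in> sem t p \<and>
        (r, G2') \<in> sem t (f v) \<and> fst G1' \<inter> fst G2' = {})"
      by (rule collapsible_seqc[OF sem_thread_exec[OF seq(2)] IH1[OF seq(2)]
            sem_thread_exec[OF seq(3)] IH2[OF seq(3)] seq(4)])
    then show ?thesis
      unfolding seq(1) by (rule collapsible_mono) (unfold sem.simps, blast)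
  next
    case break
    from IH1[OF break(1)] show ?thesis
      by (rule collapsible_mono) (use break in auto)
  qed
qed

lemma collapsible_Loop:
  assumes IH: "\<And>r G. (r, G) \<in> sem t p' \<Longrightarrow> collapsible t I L G (\<lambda>G'. (r, G') \<in> sem t p)"
    and run: "(r, G) \<in> sem t (Loop p')"
  shows "collapsible t I L G (\<lambda>G'. (r, G') \<in> sem t (Loop p))"
proof -
  from run obtain v k Gs j where G: "r = (v, k)" "G = seq_list Gs" "length Gs = Suc j"
    and body: "\<forall>i<j. \<exists>u. ((u, 0), Gs ! i) \<in> sem t p'" "((v, Suc k), Gs ! j) \<in> sem t p'"
    and disj: "disjoint_parts Gs"
    by (auto simp: disjoint_parts_def)
  define P where "P i G' \<longleftrightarrow> (if i < j then \<exists>u. ((u, 0), G') \<in> sem t p else ((v, Suc k), G') \<in> sem t p)"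
    for i G'
  have "thread_exec t (Gs ! i) \<and> collapsible t I L (Gs ! i) (P i)" if "i < length Gs" for i
  proof (cases "i < j")
    case True
    then obtain u where run_i: "((u, 0), Gs ! i) \<in> sem t p'" using body(1) by blast
    from IH[OF run_i] have "collapsible t I L (Gs ! i) (P i)"
      by (rule collapsible_mono) (auto simp: P_def True)
    with sem_thread_exec[OF run_i] show ?thesis by blast
  next
    case False
    with that G(3) have "i = j" by simp
    from IH[OF body(2)] have "collapsible t I L (Gs ! j) (P j)"
      by (rule collapsible_mono) (simp add: P_def)
    with sem_thread_exec[OF body(2)] \<open>i = j\<close> show ?thesis by simp
  qed
  then have "collapsible t I L G (\<lambda>G'. \<exists>Gs'. G' = seq_list Gs' \<and> length Gs' = length Gs \<and>
      (\<forall>i<length Gs. P i (Gs' ! i)) \<and> disjoint_parts Gs')"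
    unfolding G(2) using disj by (intro collapsible_seq_list) auto
  then show ?thesis
  proof (rule collapsible_mono)
    fix G' assume "\<exists>Gs'. G' = seq_list Gs' \<and> length Gs' = length Gs \<and>
      (\<forall>i<length Gs. P i (Gs' ! i)) \<and> disjoint_parts Gs'"
    then obtain Gs' where Gs': "G' = seq_list Gs'" "length Gs' = Suc j"
      "\<forall>i<j. \<exists>u. ((u, 0), Gs' ! i) \<in> sem t p" "((v, Suc k), Gs' ! j) \<in> sem t p"
      "disjoint_parts Gs'"
      using G(3) by (auto simp: P_def)
    then show "(r, G') \<in> sem t (Loop p)"
      unfolding G(1) by (auto simp: disjoint_parts_def)
  qed
qed

lemma collapsible_transl:
  assumes "well_defined T I L \<Lambda>" "t \<in> {1..T}"
  shows "(r, G) \<in> sem t (transl I L t p) \<Longrightarrow> collapsible t I L G (\<lambda>G'. (r, G') \<in> sem t p)"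
proof (induction p arbitrary: r G)
  case (Call m vs)
  with assms show ?case by (rule collapsible_Call)
next
  case (Let p f)
  from Let.prems have run: "(r, G) \<in> sem t (prog.Let (transl I L t p) (\<lambda>v. transl I L t (f v)))"
    by (simp only: transl.simps)
  show ?case
    by (rule collapsible_Let[OF _ _ run]) (fact Let.IH(1), rule Let.IH(2)[OF rangeI])
next
  case (Loop p)
  from Loop.prems have run: "(r, G) \<in> sem t (Loop (transl I L t p))"
    by (simp only: transl.simps)
  show ?case by (rule collapsible_Loop[OF _ run]) (fact Loop.IH)
qed (auto intro: collapsible_edgeless simp: empty_G_def)

lemma restrict_exec_simps [simp]:
  "ev (restrict_exec X A) = ev X \<inter> A"
  "po (restrict_exec X A) = po X \<inter> A \<times> A"
  "stmp (restrict_exec X A) = (\<lambda>e. if e \<in> A then stmp X e else {})"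
  "so (restrict_exec X A) = so X \<inter> {(x, y). fst x \<in> A \<and> fst y \<in> A}"
  "hb (restrict_exec X A) = hb X \<inter> {(x, y). fst x \<in> A \<and> fst y \<in> A}"
  by (simp_all add: restrict_exec_def)

lemma restrict_exec_restrict_exec: "restrict_exec (restrict_exec X A) B = restrict_exec X (A \<inter> B)"
  unfolding restrict_exec_def by (auto simp: fun_eq_iff)

lemma trans_fst_pairs: "trans {(x, y). fst x \<in> A \<and> fst y \<in> A}"
  by (rule transI) simp

lemma lloc_subset_locs: "Lb \<in> \<Lambda> \<Longrightarrow> meth e \<in> lM Lb \<Longrightarrow> e \<in> E \<Longrightarrow> lloc Lb e \<subseteq> locs \<Lambda> E"
  unfolding locs_def loc_ev_def by blast

lemma is_library_restrict:
  assumes "is_library T to Lb" "restrict_lib X Lb \<in> lC Lb"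
    and "evs_of Lb (ev X) = E1 \<union> E2" "E1 \<inter> E2 = {}" "lib_locs Lb E1 \<inter> lib_locs Lb E2 = {}"
  shows "restrict_exec X E1 \<in> lC Lb"
proof -
  from assms(1) have decompose: "\<forall>Y\<in>lC Lb. \<forall>E1 E2. ev Y = E1 \<union> E2 \<and> E1 \<inter> E2 = {} \<and>
      lib_locs Lb E1 \<inter> lib_locs Lb E2 = {} \<longrightarrow> restrict_exec Y E1 \<in> lC Lb"
    unfolding is_library_def by blast
  have "ev (restrict_lib X Lb) = E1 \<union> E2"
    using assms(3) unfolding restrict_lib_def by (auto simp: evs_of_def)
  then have "restrict_exec (restrict_lib X Lb) E1 \<in> lC Lb"
    using decompose assms(2,4,5) by blast
  moreover have "evs_of Lb (ev X) \<inter> E1 = E1" using assms(3) by blast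
  ultimately show ?thesis unfolding restrict_lib_def restrict_exec_restrict_exec by simp
qed

lemma restrict_lib_restrict_exec:
  "restrict_lib (restrict_exec X A) Lb = restrict_exec X (evs_of Lb (ev X \<inter> A))"
proof -
  have "A \<inter> evs_of Lb (ev X \<inter> A) = evs_of Lb (ev X \<inter> A)" by (auto simp: evs_of_def)
  then show ?thesis unfolding restrict_lib_def restrict_exec_restrict_exec by simp
qed

lemma ppo_restrict_exec: "ppo to (restrict_exec X A) \<subseteq> ppo to X \<inter> {(x, y). fst x \<in> A \<and> fst y \<in> A}"
  unfolding ppo_def by auto

lemma wf_exec_restrict_exec:
  assumes wf: "wf_exec T X" and A: "A \<subseteq> ev X"
  shows "wf_exec T (restrict_exec X A)"
  unfolding wf_exec_def
proof (intro conjI)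
  show "plain_exec T (ev (restrict_exec X A), po (restrict_exec X A))"
    using plain_exec_restrict[of T "ev X" "po X" A] wf unfolding wf_exec_def by simp
  show "\<forall>e\<in>ev (restrict_exec X A). stmp (restrict_exec X A) e \<noteq> {}"
    "\<forall>e. e \<notin> ev (restrict_exec X A) \<longrightarrow> stmp (restrict_exec X A) e = {}"
    using wf A unfolding wf_exec_def by auto
  have "SEv (restrict_exec X A) = SEv X \<inter> {x. fst x \<in> A}"
    unfolding SEv_def using A by auto
  then show "so (restrict_exec X A) \<subseteq> SEv (restrict_exec X A) \<times> SEv (restrict_exec X A)"
    "hb (restrict_exec X A) \<subseteq> SEv (restrict_exec X A) \<times> SEv (restrict_exec X A)"
    using wf unfolding wf_exec_def by auto
qed

lemma so_restrict_exec_libs: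
  assumes "so X = (\<Union>Lb\<in>\<Lambda>. so (restrict_lib X Lb))"
  shows "so (restrict_exec X A) = (\<Union>Lb\<in>\<Lambda>. so (restrict_lib (restrict_exec X A) Lb))"
proof
  show "so (restrict_exec X A) \<subseteq> (\<Union>Lb\<in>\<Lambda>. so (restrict_lib (restrict_exec X A) Lb))"
  proof
    fix z assume "z \<in> so (restrict_exec X A)"
    then have z: "z \<in> so X" "fst (fst z) \<in> A" "fst (snd z) \<in> A" by auto
    then obtain Lb where Lb: "Lb \<in> \<Lambda>" "z \<in> so (restrict_lib X Lb)" using assms by blast
    then have "z \<in> so (restrict_exec X (evs_of Lb (ev X \<inter> A)))"
      using z unfolding restrict_lib_def evs_of_def by auto
    with Lb(1) show "z \<in> (\<Union>Lb\<in>\<Lambda>. so (restrict_lib (restrict_exec X A) Lb))"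
      unfolding restrict_lib_restrict_exec by blast
  qed
  show "(\<Union>Lb\<in>\<Lambda>. so (restrict_lib (restrict_exec X A) Lb)) \<subseteq> so (restrict_exec X A)"
    unfolding restrict_lib_restrict_exec evs_of_def by auto
qed

lemma consistent_restrict_exec:
  fixes X :: "('v, 'm, 's) execution"
  assumes cons: "consistent T to \<Lambda> X" and A: "A \<subseteq> ev X"
    and parts: "\<forall>Lb\<in>\<Lambda>. restrict_exec X (evs_of Lb A) \<in> lC Lb"
  shows "consistent T to \<Lambda> (restrict_exec X A)"
proof -
  define Y where "Y = restrict_exec X A"
  define P :: "((('v, 'm) event \<times> 's) \<times> (('v, 'm) event \<times> 's)) set"
    where "P = {(x, y). fst x \<in> A \<and> fst y \<in> A}"
  have Y: "ev Y = A" "so Y = so X \<inter> P" "hb Y = hb X \<inter> P"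
    unfolding Y_def P_def using A by auto
  have restrict_lib_Y: "restrict_lib Y Lb = restrict_exec X (evs_of Lb A)" for Lb
    unfolding Y_def restrict_lib_restrict_exec using A by (simp add: Int_absorb1)
  from cons have wf: "wf_exec T X" and closed: "(ppo to X \<union> so X)\<^sup>+ \<subseteq> hb X"
    and "irrefl (hb X)" "trans (hb X)" and evs: "ev X = (\<Union>Lb\<in>\<Lambda>. evs_of Lb (ev X))"
    and sos: "so X = (\<Union>Lb\<in>\<Lambda>. so (restrict_lib X Lb))"
    unfolding consistent_def by blast+
  have "(ppo to Y \<union> so Y)\<^sup>+ \<subseteq> hb Y"
  proof -
    have "ppo to Y \<subseteq> ppo to X \<inter> P" unfolding Y_def P_def by (rule ppo_restrict_exec)
    then have "ppo to Y \<union> so Y \<subseteq> ppo to X \<union> so X" "ppo to Y \<union> so Y \<subseteq> P"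
      unfolding Y by blast+
    then have "(ppo to Y \<union> so Y)\<^sup>+ \<subseteq> (ppo to X \<union> so X)\<^sup>+" "(ppo to Y \<union> so Y)\<^sup>+ \<subseteq> P\<^sup>+"
      by (simp_all add: trancl_mono_subset)
    moreover have "P\<^sup>+ = P" unfolding P_def using trans_fst_pairs by (rule trancl_id)
    ultimately show ?thesis unfolding Y using closed by blast
  qed
  moreover have "irrefl (hb Y)"
    using \<open>irrefl (hb X)\<close> unfolding Y irrefl_def by blast
  moreover have "trans (hb Y)"
    unfolding Y P_def using \<open>trans (hb X)\<close> trans_fst_pairs by (rule trans_Int)
  moreover have "ev Y = (\<Union>Lb\<in>\<Lambda>. evs_of Lb (ev Y))"
    using evs A unfolding Y(1) evs_of_def by blast
  moreover have "so Y = (\<Union>Lb\<in>\<Lambda>. so (restrict_lib Y Lb))"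
    unfolding Y_def using sos by (rule so_restrict_exec_libs)
  moreover have "wf_exec T Y" unfolding Y_def using wf A by (rule wf_exec_restrict_exec)
  moreover have "\<forall>Lb\<in>\<Lambda>. restrict_lib Y Lb \<in> lC Lb" using parts unfolding restrict_lib_Y .
  ultimately show ?thesis unfolding consistent_def Y_def[symmetric] by (intro conjI)
qed

lemma trans_rtrancl_step: "trans r \<Longrightarrow> (u, v) \<in> r\<^sup>* \<Longrightarrow> (v, w) \<in> r \<Longrightarrow> (w, z) \<in> r\<^sup>* \<Longrightarrow> (u, z) \<in> r"
  by (metis rtrancl_into_trancl1 trancl_id trancl_rtrancl_trancl)

lemma consistent_ppo_so_hb:
  assumes "consistent T to \<Lambda> X"
  shows "ppo to X \<subseteq> hb X" "so X \<subseteq> hb X"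
proof -
  have "(ppo to X \<union> so X)\<^sup>+ \<subseteq> hb X" using assms unfolding consistent_def by (elim conjE)
  moreover have "ppo to X \<subseteq> (ppo to X \<union> so X)\<^sup>+" "so X \<subseteq> (ppo to X \<union> so X)\<^sup>+" by auto
  ultimately show "ppo to X \<subseteq> hb X" "so X \<subseteq> hb X" by blast+
qed

lemma restrict_exec_cong:
  assumes "ev X \<inter> D = ev Y \<inter> D" "po X \<inter> D \<times> D = po Y \<inter> D \<times> D" "\<forall>e\<in>D. stmp X e = stmp Y e"
    "so X \<inter> {(x, y). fst x \<in> D \<and> fst y \<in> D} = so Y \<inter> {(x, y). fst x \<in> D \<and> fst y \<in> D}"
    "hb X \<inter> {(x, y). fst x \<in> D \<and> fst y \<in> D} = hb Y \<inter> {(x, y). fst x \<in> D \<and> fst y \<in> D}"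
  shows "restrict_exec X D = restrict_exec Y D"
proof -
  have "(\<lambda>e. if e \<in> D then stmp X e else {}) = (\<lambda>e. if e \<in> D then stmp Y e else {})"
    using assms(3) by (simp add: fun_eq_iff)
  with assms show ?thesis unfolding restrict_exec_def by simp
qed

section \<open>A consistent execution of the translated program\<close>

locale translated_run =
  fixes T :: nat and to :: "('s \<times> 's) set"
    and \<Lambda> :: "('v, 'm, 's) library set" and L :: "('v, 'm, 's) library"
    and I :: "('v, 'm) impl" and ps :: "('v, 'm) prog list" and vs :: "'v list"
    and X :: "('v, 'm, 's) execution" and Gs :: "('v, 'm) pexec list"
    and BB :: "nat \<Rightarrow> ('v, 'm) block set" and \<nu> :: "('v, 'm) block \<Rightarrow> nat"
  assumes libs: "\<forall>Lb\<in>\<Lambda>. is_library T to Lb"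
    and compat: "\<forall>Lb\<in>\<Lambda>. compatible L Lb"
    and ls: "locally_sound T to I L \<Lambda>"
    and len: "length ps = T"
    and locdisj: "loc_impl T (insert L \<Lambda>) I L \<inter> loc_prog (insert L \<Lambda>) ps = {}"
    and cons: "consistent T to \<Lambda> X"
    and lenvs: "length vs = T"
    and evX: "ev X = (\<Union>i<T. fst (Gs ! i))" and poX: "po X = (\<Union>i<T. snd (Gs ! i))"
    and thread_exec_Gs: "\<forall>i<T. thread_exec (Suc i) (Gs ! i)"
    and impl_blocks_Gs: "\<forall>i<T. impl_blocks (Suc i) I L (Gs ! i) (BB i)"
    and collapse_Gs: "\<forall>i<T. \<forall>f. collapses (Suc i) (Gs ! i) (BB i) f \<longrightarrow>
         ((vs ! i, 0), collapse f (Gs ! i)) \<in> sem (Suc i) (ps ! i) \<and> coherent f (Gs ! i)"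
    and \<nu>: "inj_on \<nu> (\<Union>i<T. BB i)"
begin

definition "all_blocks = (\<Union>i<T. BB i)"
definition "in_block x \<longleftrightarrow> (\<exists>b\<in>all_blocks. x \<in> fst b)"
definition "block_of x = (SOME b. b \<in> all_blocks \<and> x \<in> fst b)"
(* Collapsed events get fresh identifiers through \<nu>, which is injective on blocks; they cannot
   clash with client events, whose methods are not in L. *)
definition "abs_ev x = (if in_block x then (thread x, \<nu> (block_of x), snd (block_of x)) else x)"
definition "impl_evs = {x \<in> ev X. in_block x}"
definition "client_evs = {x \<in> ev X. \<not> in_block x}"
definition "call_evs = abs_ev ` impl_evs"

lemma wf_exec_X: "wf_exec T X"
  using cons unfolding consistent_def by (elim conjE)

lemma so_hb_X_sevs: "so X \<subseteq> SEv X \<times> SEv X" "hb X \<subseteq> SEv X \<times> SEv X"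
  using wf_exec_X unfolding wf_exec_def by blast+

lemma ev_X_libs: "ev X = (\<Union>Lb\<in>\<Lambda>. evs_of Lb (ev X))"
  using cons unfolding consistent_def by (elim conjE)

lemma so_X_libs: "so X = (\<Union>Lb\<in>\<Lambda>. so (restrict_lib X Lb))"
  using cons unfolding consistent_def by (elim conjE)

lemma trans_hb_X: "trans (hb X)"
  using cons unfolding consistent_def by blast

lemma plain_exec_X: "plain_exec T (ev X, po X)"
  using cons unfolding consistent_def wf_exec_def by blast

lemma ppo_X_hb: "(x, y) \<in> po X \<Longrightarrow> a \<in> stmp X x \<Longrightarrow> b \<in> stmp X y \<Longrightarrow> (a, b) \<in> to \<Longrightarrow> ((x, a), (y, b)) \<in> hb X"
  using consistent_ppo_so_hb(1)[OF cons] unfolding ppo_def by blast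

lemma thread_Gs: "i < T \<Longrightarrow> x \<in> fst (Gs ! i) \<Longrightarrow> thread x = Suc i"
  using thread_exec_Gs unfolding thread_exec_def by blast

lemma Gs_index_unique: "i < T \<Longrightarrow> j < T \<Longrightarrow> x \<in> fst (Gs ! i) \<Longrightarrow> x \<in> fst (Gs ! j) \<Longrightarrow> i = j"
  using thread_Gs[of i x] thread_Gs[of j x] by simp

lemma ev_X_Gs: "i < T \<Longrightarrow> x \<in> fst (Gs ! i) \<Longrightarrow> x \<in> ev X"
  using evX by blast

lemma block_subset: "i < T \<Longrightarrow> b \<in> BB i \<Longrightarrow> fst b \<subseteq> fst (Gs ! i)"
  using impl_blocks_Gs impl_blocks_subset by blast

lemma block_unique: "i < T \<Longrightarrow> b \<in> BB i \<Longrightarrow> x \<in> fst b \<Longrightarrow> b' \<in> all_blocks \<Longrightarrow> x \<in> fst b' \<Longrightarrow> b' = b"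
proof -
  assume b: "i < T" "b \<in> BB i" "x \<in> fst b" and b': "b' \<in> all_blocks" "x \<in> fst b'"
  then obtain j where j: "j < T" "b' \<in> BB j" unfolding all_blocks_def by blast
  have "x \<in> fst (Gs ! i)" "x \<in> fst (Gs ! j)" using block_subset b b' j by blast+
  with b j have "j = i" using Gs_index_unique by blast
  with impl_blocks_Gs b b' j show "b' = b" using impl_blocks_disjoint by blast
qed

lemma block_of_eq: "i < T \<Longrightarrow> b \<in> BB i \<Longrightarrow> x \<in> fst b \<Longrightarrow> block_of x = b"
proof -
  assume b: "i < T" "b \<in> BB i" "x \<in> fst b"
  then have "b \<in> all_blocks \<and> x \<in> fst b" unfolding all_blocks_def by blast
  then have "block_of x \<in> all_blocks \<and> x \<in> fst (block_of x)" unfolding block_of_def by (rule someI)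
  then show "block_of x = b" using block_unique b by blast
qed

lemma abs_ev_block: "i < T \<Longrightarrow> b \<in> BB i \<Longrightarrow> x \<in> fst b \<Longrightarrow> abs_ev x = (Suc i, \<nu> b, snd b)"
proof -
  assume b: "i < T" "b \<in> BB i" "x \<in> fst b"
  then have "in_block x" unfolding in_block_def all_blocks_def by blast
  moreover have "thread x = Suc i" using thread_Gs block_subset b by blast
  ultimately show ?thesis using block_of_eq[OF b] unfolding abs_ev_def by simp
qed

lemma in_blockE:
  assumes "in_block x"
  obtains i b where "i < T" "b \<in> BB i" "x \<in> fst b"
  using assms unfolding in_block_def all_blocks_def by blast

lemma abs_ev_client: "\<not> in_block x \<Longrightarrow> abs_ev x = x"
  unfolding abs_ev_def by simp

lemma meth_ev_X: "x \<in> ev X \<Longrightarrow> meth x \<notin> lM L"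
proof -
  assume x: "x \<in> ev X"
  with ev_X_libs obtain Lb where "Lb \<in> \<Lambda>" "meth x \<in> lM Lb" unfolding evs_of_def by blast
  then show ?thesis using compat unfolding compatible_def by blast
qed

lemma meth_abs_ev: "in_block x \<Longrightarrow> meth (abs_ev x) \<in> lM L"
proof -
  assume "in_block x"
  then obtain i b where b: "i < T" "b \<in> BB i" "x \<in> fst b" by (rule in_blockE)
  obtain A m vs v where b_eq: "b = (A, m, vs, v)" by (cases b)
  with b(2) have "(A, m, vs, v) \<in> BB i" by simp
  then have "m \<in> lM L" by (rule impl_blocksD(3)[OF impl_blocks_Gs[rule_format, OF b(1)]])
  with abs_ev_block[OF b] b_eq show ?thesis by (simp add: meth_def)
qed

lemma abs_ev_eqD:
  assumes "x \<in> ev X" "y \<in> ev X" "abs_ev x = abs_ev y"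
  shows "x = y \<or> (\<exists>b\<in>all_blocks. x \<in> fst b \<and> y \<in> fst b)"
proof (cases "in_block x")
  case True
  then obtain i b where b: "i < T" "b \<in> BB i" "x \<in> fst b" by (rule in_blockE)
  show ?thesis
  proof (cases "in_block y")
    case True
    then obtain j b' where b': "j < T" "b' \<in> BB j" "y \<in> fst b'" by (rule in_blockE)
    have "\<nu> b = \<nu> b'" using abs_ev_block[OF b] abs_ev_block[OF b'] assms(3) by simp
    then have "b = b'" using \<nu> b b' unfolding inj_on_def by blast
    then show ?thesis using b b' unfolding all_blocks_def by blast
  next
    case False
    then have "meth y \<in> lM L" using meth_abs_ev[OF \<open>in_block x\<close>] assms(3) abs_ev_client by simp
    then show ?thesis using meth_ev_X assms(2) by blast
  qed
next
  case False
  then have x: "abs_ev x = x" by (rule abs_ev_client)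
  show ?thesis
  proof (cases "in_block y")
    case True
    then have "meth x \<in> lM L" using meth_abs_ev[OF True] assms(3) x by simp
    then show ?thesis using meth_ev_X assms(1) by blast
  next
    case False
    then show ?thesis using x abs_ev_client assms(3) by simp
  qed
qed

lemma collapses_abs_ev: "i < T \<Longrightarrow> collapses (Suc i) (Gs ! i) (BB i) abs_ev"
  unfolding collapses_def
proof (intro conjI ballI impI)
  assume i: "i < T"
  fix b assume "b \<in> BB i"
  with i show "case b of (A, l) \<Rightarrow> \<exists>\<iota>. \<forall>x\<in>A. abs_ev x = (Suc i, \<iota>, l)"
    using abs_ev_block by (cases b) auto
next
  assume i: "i < T"
  fix x assume x: "x \<in> fst (Gs ! i)" "\<forall>b\<in>BB i. x \<notin> fst b"
  have "\<not> in_block x"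
  proof
    assume "in_block x"
    then obtain j b where b: "j < T" "b \<in> BB j" "x \<in> fst b" by (rule in_blockE)
    then have "j = i" using block_subset Gs_index_unique x i by blast
    then show False using b x by blast
  qed
  then show "abs_ev x = x" by (rule abs_ev_client)
next
  assume i: "i < T"
  fix x y assume xy: "x \<in> fst (Gs ! i)" "y \<in> fst (Gs ! i)" "abs_ev x = abs_ev y"
  then have "x = y \<or> (\<exists>b\<in>all_blocks. x \<in> fst b \<and> y \<in> fst b)" using abs_ev_eqD ev_X_Gs i by blast
  then show "x = y \<or> (\<exists>b\<in>BB i. x \<in> fst b \<and> y \<in> fst b)"
  proof
    assume "\<exists>b\<in>all_blocks. x \<in> fst b \<and> y \<in> fst b"
    then obtain j b where b: "j < T" "b \<in> BB j" "x \<in> fst b" "y \<in> fst b" unfolding all_blocks_def by blast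
    then have "j = i" using block_subset Gs_index_unique xy i by blast
    then show ?thesis using b by blast
  qed simp
qed

lemma collapse_abs_ev_Gs: "i < T \<Longrightarrow> ((vs ! i, 0), collapse abs_ev (Gs ! i)) \<in> sem (Suc i) (ps ! i) \<and> coherent abs_ev (Gs ! i)"
  using collapse_Gs collapses_abs_ev by blast

lemma sem_conc_collapse: "(vs, (abs_ev ` ev X, collapse_rel abs_ev (po X))) \<in> sem_conc ps"
proof -
  define Gs' where "Gs' = map (\<lambda>i. collapse abs_ev (Gs ! i)) [0..<T]"
  have Gs': "length Gs' = T" "\<And>i. i < T \<Longrightarrow> Gs' ! i = collapse abs_ev (Gs ! i)"
    unfolding Gs'_def by simp_all
  have "abs_ev ` ev X = (\<Union>i<length ps. fst (Gs' ! i))"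
    unfolding evX len using Gs' by (auto simp: collapse_def)
  moreover have "collapse_rel abs_ev (po X) = (\<Union>i<length ps. snd (Gs' ! i))"
    unfolding poX len collapse_rel_UN using Gs' by (simp add: collapse_def)
  moreover have "\<forall>i<length ps. ((vs ! i, 0), Gs' ! i) \<in> sem (Suc i) (ps ! i)"
    using collapse_abs_ev_Gs Gs' len by simp
  ultimately show ?thesis
    unfolding sem_conc_def using Gs'(1) len lenvs by auto
qed

lemma thread_abs_ev: "thread (abs_ev x) = thread x"
  unfolding abs_ev_def thread_def by simp

lemma coherent_abs_ev: "coherent abs_ev (ev X, po X)"
proof (rule coherentI, unfold fst_conv snd_conv)
  fix x y x' y'
  assume xy: "(x, y) \<in> po X" "abs_ev x \<noteq> abs_ev y" and x'y': "x' \<in> ev X" "y' \<in> ev X"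
    "abs_ev x' = abs_ev x" "abs_ev y' = abs_ev y"
  from xy(1) obtain i where i: "i < T" "(x, y) \<in> snd (Gs ! i)" using poX by blast
  then have xy_i: "x \<in> fst (Gs ! i)" "y \<in> fst (Gs ! i)"
    using thread_exec_Gs unfolding thread_exec_def by blast+
  have "thread x' = thread x" "thread y' = thread y"
    using arg_cong[OF x'y'(3), of thread] arg_cong[OF x'y'(4), of thread] by (simp_all add: thread_abs_ev)
  then have "thread x' = Suc i" "thread y' = Suc i" using thread_Gs[OF i(1)] xy_i by simp_all
  moreover obtain j k where j: "j < T" "x' \<in> fst (Gs ! j)" and k: "k < T" "y' \<in> fst (Gs ! k)"
    using x'y'(1,2) evX by blast
  ultimately have "j = i" "k = i" using thread_Gs[OF j] thread_Gs[OF k] by simp_all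
  with j k have "x' \<in> fst (Gs ! i)" "y' \<in> fst (Gs ! i)" by simp_all
  then have "(x', y') \<in> snd (Gs ! i)"
    using coherentD[OF conjunct2[OF collapse_abs_ev_Gs[OF i(1)]] i(2) xy(2)] x'y'(3,4) by blast
  with i(1) show "(x', y') \<in> po X" using poX by blast
qed

lemma plain_exec_abs: "plain_exec T (abs_ev ` ev X, collapse_rel abs_ev (po X))"
  using plain_exec_collapse[OF plain_exec_X _ coherent_abs_ev] thread_abs_ev by blast

lemma po_reflect: "x \<in> ev X \<Longrightarrow> y \<in> ev X \<Longrightarrow> (abs_ev x, abs_ev y) \<in> collapse_rel abs_ev (po X) \<Longrightarrow> (x, y) \<in> po X"
  by (rule collapse_rel_coherentD[OF coherent_abs_ev])

lemma impl_evs_subset: "impl_evs \<subseteq> ev X"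
  unfolding impl_evs_def by blast

lemma client_evs_subset: "client_evs \<subseteq> ev X"
  unfolding client_evs_def by blast

lemma ev_X_split: "ev X = client_evs \<union> impl_evs" "client_evs \<inter> impl_evs = {}"
  unfolding client_evs_def impl_evs_def by auto

lemma abs_ev_client_evs: "x \<in> client_evs \<Longrightarrow> abs_ev x = x"
  unfolding client_evs_def using abs_ev_client by blast

lemma meth_call_evs: "e \<in> call_evs \<Longrightarrow> meth e \<in> lM L"
  unfolding call_evs_def impl_evs_def using meth_abs_ev by blast

lemma meth_client_evs: "e \<in> client_evs \<Longrightarrow> meth e \<notin> lM L"
  using meth_ev_X client_evs_subset by blast

lemma client_call_disjoint: "client_evs \<inter> call_evs = {}"
  using meth_call_evs meth_client_evs by blast

lemma abs_ev_X: "abs_ev ` ev X = client_evs \<union> call_evs"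
proof -
  have "abs_ev ` ev X = abs_ev ` client_evs \<union> abs_ev ` impl_evs" using ev_X_split(1) by (metis image_Un)
  moreover have "abs_ev ` client_evs = client_evs" using abs_ev_client_evs by simp
  ultimately show ?thesis unfolding call_evs_def by simp
qed

lemma po_client_evs:
  assumes "x \<in> client_evs" "y \<in> client_evs"
  shows "(x, y) \<in> collapse_rel abs_ev (po X) \<longleftrightarrow> (x, y) \<in> po X"
proof
  have ev: "x \<in> ev X" "y \<in> ev X" using assms client_evs_subset by auto
  show "(x, y) \<in> po X" if "(x, y) \<in> collapse_rel abs_ev (po X)"
    using po_reflect[OF ev] that abs_ev_client_evs[OF assms(1)] abs_ev_client_evs[OF assms(2)] by simp
  assume xy: "(x, y) \<in> po X"
  have "irrefl (po X)" using plain_exec_X unfolding plain_exec_iff by blast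
  with xy have "x \<noteq> y" unfolding irrefl_def by blast
  then show "(x, y) \<in> collapse_rel abs_ev (po X)"
    using collapse_relI[OF xy, of abs_ev] abs_ev_client_evs assms by simp
qed

lemma lib_locs_client_evs:
  assumes "Lb \<in> \<Lambda>"
  shows "lib_locs Lb (evs_of Lb client_evs) \<subseteq> loc_prog (insert L \<Lambda>) ps"
proof -
  have "locs (insert L \<Lambda>) (abs_ev ` ev X) \<subseteq> loc_prog (insert L \<Lambda>) ps"
    using sem_conc_collapse unfolding loc_prog_def by force
  moreover have "lib_locs Lb (evs_of Lb client_evs) \<subseteq> locs (insert L \<Lambda>) (abs_ev ` ev X)"
    unfolding lib_locs_def evs_of_def abs_ev_X using lloc_subset_locs assms by blast
  ultimately show ?thesis by blast
qed

lemma lib_locs_impl_evs: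
  assumes "Lb \<in> \<Lambda>"
  shows "lib_locs Lb (evs_of Lb impl_evs) \<subseteq> loc_impl T (insert L \<Lambda>) I L"
  unfolding lib_locs_def
proof (rule UN_least)
  fix e assume "e \<in> evs_of Lb impl_evs"
  then have e: "meth e \<in> lM Lb" "in_block e" unfolding evs_of_def impl_evs_def by auto
  from e(2) obtain i b where b: "i < T" "b \<in> BB i" "e \<in> fst b" by (rule in_blockE)
  obtain A m us v where b_eq: "b = (A, m, us, v)" by (cases b)
  with b(2) have "(A, m, us, v) \<in> BB i" by simp
  note blk = impl_blocksD[OF impl_blocks_Gs[rule_format, OF b(1)] this]
  have "locs (insert L \<Lambda>) A \<subseteq> loc_impl T (insert L \<Lambda>) I L"
    unfolding loc_impl_def using b(1) blk(3,4) by force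
  moreover have "lloc Lb e \<subseteq> locs (insert L \<Lambda>) A"
    using lloc_subset_locs[of Lb "insert L \<Lambda>" e A] assms e(1) b(3) b_eq by simp
  ultimately show "lloc Lb e \<subseteq> loc_impl T (insert L \<Lambda>) I L" by blast
qed

lemma
  assumes Lb: "Lb \<in> \<Lambda>"
  shows lC_impl_evs: "restrict_exec X (evs_of Lb impl_evs) \<in> lC Lb"
    and lC_client_evs: "restrict_exec X (evs_of Lb client_evs) \<in> lC Lb"
proof -
  have lib: "is_library T to Lb" using libs Lb by blast
  have part: "restrict_lib X Lb \<in> lC Lb" using cons Lb unfolding consistent_def by blast
  have split: "evs_of Lb (ev X) = evs_of Lb impl_evs \<union> evs_of Lb client_evs"
    "evs_of Lb impl_evs \<inter> evs_of Lb client_evs = {}"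
    using ev_X_split by (auto simp: evs_of_def)
  have locs: "lib_locs Lb (evs_of Lb impl_evs) \<inter> lib_locs Lb (evs_of Lb client_evs) = {}"
    using lib_locs_impl_evs[OF Lb] lib_locs_client_evs[OF Lb] locdisj by blast
  show "restrict_exec X (evs_of Lb impl_evs) \<in> lC Lb"
    by (rule is_library_restrict[OF lib part split locs])
  show "restrict_exec X (evs_of Lb client_evs) \<in> lC Lb"
    by (rule is_library_restrict[OF lib part]) (use split locs in auto)
qed

definition "impl_exec = restrict_exec X impl_evs"

definition "call_po = collapse_rel abs_ev (po X) \<inter> call_evs \<times> call_evs"

lemma impl_exec_simps:
  "ev impl_exec = impl_evs" "po impl_exec = po X \<inter> impl_evs \<times> impl_evs"
  "hb impl_exec = hb X \<inter> {(x, y). fst x \<in> impl_evs \<and> fst y \<in> impl_evs}"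
  unfolding impl_exec_def using impl_evs_subset by auto

lemma SEv_impl_exec: "(e, a) \<in> SEv impl_exec \<longleftrightarrow> e \<in> impl_evs \<and> a \<in> stmp X e"
  unfolding impl_exec_def SEv_def using impl_evs_subset by auto

lemma consistent_impl_exec: "consistent T to \<Lambda> impl_exec"
  unfolding impl_exec_def
  using consistent_restrict_exec[OF cons impl_evs_subset] lC_impl_evs by blast

lemma plain_exec_call: "plain_exec T (call_evs, call_po)"
proof -
  have "call_evs \<subseteq> abs_ev ` ev X" unfolding call_evs_def using impl_evs_subset by blast
  then show ?thesis
    using plain_exec_restrict[OF plain_exec_abs, of call_evs] unfolding call_po_def
    by (simp add: Int_absorb1)
qed

lemma call_evsE:
  assumes "e' \<in> call_evs"
  obtains i A m us v where "i < T" "(A, m, us, v) \<in> BB i" "e' = (Suc i, \<nu> (A, m, us, v), m, us, v)"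
proof -
  from assms obtain x where x: "x \<in> impl_evs" "e' = abs_ev x" unfolding call_evs_def by blast
  then have "in_block x" unfolding impl_evs_def by blast
  then obtain i b where b: "i < T" "b \<in> BB i" "x \<in> fst b" by (rule in_blockE)
  obtain A m us v where "b = (A, m, us, v)" by (cases b)
  with abs_ev_block[OF b] b x that show ?thesis by simp
qed

lemma abs_ev_preimage:
  assumes b: "i < T" "b \<in> BB i"
  shows "{e \<in> impl_evs. abs_ev e = (Suc i, \<nu> b, snd b)} = fst b"
proof
  have sub: "fst b \<subseteq> ev X" using block_subset[OF b] ev_X_Gs[OF b(1)] by blast
  show "fst b \<subseteq> {e \<in> impl_evs. abs_ev e = (Suc i, \<nu> b, snd b)}"
  proof
    fix e assume e: "e \<in> fst b"
    then have "in_block e" using b unfolding in_block_def all_blocks_def by blast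
    with e sub abs_ev_block[OF b e] show "e \<in> {e \<in> impl_evs. abs_ev e = (Suc i, \<nu> b, snd b)}"
      unfolding impl_evs_def by blast
  qed
  show "{e \<in> impl_evs. abs_ev e = (Suc i, \<nu> b, snd b)} \<subseteq> fst b"
  proof
    fix e assume e: "e \<in> {e \<in> impl_evs. abs_ev e = (Suc i, \<nu> b, snd b)}"
    obtain x where x: "x \<in> fst b" using impl_blocks_nonempty impl_blocks_Gs b by blast
    have "e \<in> ev X" "abs_ev e = abs_ev x"
      using e abs_ev_block[OF b x] impl_evs_subset by auto
    then have "e = x \<or> (\<exists>b'\<in>all_blocks. e \<in> fst b' \<and> x \<in> fst b')"
      using abs_ev_eqD x sub by blast
    then show "e \<in> fst b" using block_unique[OF b x] x by blast
  qed
qed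

lemma po_X_Restr: "i < T \<Longrightarrow> A \<subseteq> fst (Gs ! i) \<Longrightarrow> po X \<inter> A \<times> A = snd (Gs ! i) \<inter> A \<times> A"
proof
  assume i: "i < T" "A \<subseteq> fst (Gs ! i)"
  show "po X \<inter> A \<times> A \<subseteq> snd (Gs ! i) \<inter> A \<times> A"
  proof
    fix z assume z: "z \<in> po X \<inter> A \<times> A"
    obtain x y where xy: "z = (x, y)" by (cases z)
    with z obtain k where k: "k < T" "(x, y) \<in> snd (Gs ! k)" using poX by blast
    then have "x \<in> fst (Gs ! k)" using thread_exec_Gs unfolding thread_exec_def by blast
    moreover have "x \<in> fst (Gs ! i)" using z xy i by blast
    ultimately have "k = i" using Gs_index_unique i k by blast
    then show "z \<in> snd (Gs ! i) \<inter> A \<times> A" using k z xy by simp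
  qed
  show "snd (Gs ! i) \<inter> A \<times> A \<subseteq> po X \<inter> A \<times> A" using poX i by blast
qed

lemma abstracts_impl_exec: "abstracts I L (ev impl_exec, po impl_exec) (call_evs, call_po) abs_ev"
  unfolding abstracts_def fst_conv snd_conv impl_exec_simps
proof (intro conjI)
  show "abs_ev ` impl_evs = call_evs" unfolding call_evs_def ..
  show "evs_of L impl_evs = {}" unfolding evs_of_def using meth_ev_X impl_evs_subset by blast
  show "evs_of L call_evs = call_evs" unfolding evs_of_def using meth_call_evs by blast
  show "\<forall>(x, y)\<in>po X \<inter> impl_evs \<times> impl_evs. (abs_ev x, abs_ev y) \<in> call_po\<^sup>*"
  proof clarify
    fix x y assume xy: "(x, y) \<in> po X" "x \<in> impl_evs" "y \<in> impl_evs"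
    show "(abs_ev x, abs_ev y) \<in> call_po\<^sup>*"
    proof (cases "abs_ev x = abs_ev y")
      case False
      then have "(abs_ev x, abs_ev y) \<in> call_po"
        unfolding call_po_def call_evs_def using collapse_relI[OF xy(1) False] xy(2,3) by blast
      then show ?thesis by blast
    qed simp
  qed
  show "\<forall>e1\<in>impl_evs. \<forall>e2\<in>impl_evs. (abs_ev e1, abs_ev e2) \<in> call_po \<longrightarrow>
      (e1, e2) \<in> po X \<inter> impl_evs \<times> impl_evs"
    using po_reflect impl_evs_subset unfolding call_po_def by blast
  show "\<forall>e'\<in>call_evs. let A = {e \<in> impl_evs. abs_ev e = e'} in
      ((outv e', 0), A, po X \<inter> impl_evs \<times> impl_evs \<inter> A \<times> A) \<in> sem (thread e') (I (thread e') (meth e') (args e'))"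
  proof
    fix e' assume "e' \<in> call_evs"
    then obtain i A m us v where b: "i < T" "(A, m, us, v) \<in> BB i"
      and e': "e' = (Suc i, \<nu> (A, m, us, v), m, us, v)"
      by (rule call_evsE)
    have pre: "{e \<in> impl_evs. abs_ev e = e'} = A"
      using abs_ev_preimage[OF b] e' by simp
    have "A \<subseteq> fst (Gs ! i)" using block_subset[OF b] by simp
    moreover have "A \<subseteq> impl_evs" using pre by blast
    ultimately have "po X \<inter> impl_evs \<times> impl_evs \<inter> A \<times> A = snd (Gs ! i) \<inter> A \<times> A"
      using po_X_Restr[OF b(1)] by blast
    with impl_blocksD(4)[OF impl_blocks_Gs[rule_format, OF b(1)] b(2)] pre e'
    show "let A = {e \<in> impl_evs. abs_ev e = e'} in
      ((outv e', 0), A, po X \<inter> impl_evs \<times> impl_evs \<inter> A \<times> A) \<in> sem (thread e') (I (thread e') (meth e') (args e'))"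
      by (simp add: Let_def outv_def meth_def args_def thread_def)
  qed
qed

definition "call_sevs stmp' = {(e, a). e \<in> call_evs \<and> a \<in> stmp' e}"
definition "call_exec stmp' so' = \<lparr>ev = call_evs, po = call_po, stmp = stmp', so = so', hb = {}\<rparr>"

end

section \<open>The execution of the source program\<close>

(* stmp', so' and g are what local soundness provides for the abstraction of impl_exec to the
   call events. *)
locale lifted_run = translated_run T to \<Lambda> L I ps vs X Gs BB \<nu>
  for T :: nat and to :: "('s \<times> 's) set"
    and \<Lambda> :: "('v, 'm, 's) library set" and L :: "('v, 'm, 's) library"
    and I :: "('v, 'm) impl" and ps :: "('v, 'm) prog list" and vs :: "'v list"
    and X :: "('v, 'm, 's) execution" and Gs :: "('v, 'm) pexec list"
    and BB :: "nat \<Rightarrow> ('v, 'm) block set" and \<nu> :: "('v, 'm) block \<Rightarrow> nat" +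
  fixes stmp' :: "('v, 'm) event \<Rightarrow> 's set"
    and so' :: "((('v, 'm) event \<times> 's) \<times> (('v, 'm) event \<times> 's)) set"
    and g :: "('v, 'm) event \<times> 's \<Rightarrow> ('v, 'm) event \<times> 's"
  assumes stmp'_nonempty: "\<forall>e\<in>call_evs. stmp' e \<noteq> {}"
    and stmp'_outside: "\<forall>e. e \<notin> call_evs \<longrightarrow> stmp' e = {}"
    and so'_sevs: "so' \<subseteq> call_sevs stmp' \<times> call_sevs stmp'"
    and g_sevs: "\<forall>x\<in>call_sevs stmp'. g x \<in> SEv impl_exec"
    and g_stamps: "\<forall>e' a' e a. (e', a') \<in> call_sevs stmp' \<and> g (e', a') = (e, a) \<longrightarrow>
         abs_ev e = e' \<and>
         (\<forall>a0. (a0, a') \<in> to \<longrightarrow> (\<exists>e1 a1. (e1, a1) \<in> SEv impl_exec \<and> abs_ev e1 = e' \<and> (a0, a1) \<in> to \<and>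
                                         ((e1, a1), (e, a)) \<in> (hb impl_exec)\<^sup>*)) \<and>
         (\<forall>a0. (a', a0) \<in> to \<longrightarrow> (\<exists>e2 a2. (e2, a2) \<in> SEv impl_exec \<and> abs_ev e2 = e' \<and> (a2, a0) \<in> to \<and>
                                         ((e, a), (e2, a2)) \<in> (hb impl_exec)\<^sup>*))"
    and so'_hb: "\<forall>(x, y)\<in>so'. (g x, g y) \<in> hb impl_exec"
    and call_exec_lib: "\<forall>hb'. hb' \<subseteq> call_sevs stmp' \<times> call_sevs stmp' \<and> trans hb' \<and>
         (ppo to (call_exec stmp' so') \<union> so')\<^sup>+ \<subseteq> hb' \<and> (\<forall>(x, y)\<in>hb'. (g x, g y) \<in> hb impl_exec)
         \<longrightarrow> (call_exec stmp' so')\<lparr>hb := hb'\<rparr> \<in> lC L"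

context translated_run
begin

lemma lifted_run_exists: "\<exists>stmp' so' g. lifted_run T to \<Lambda> L I ps vs X Gs BB \<nu> stmp' so' g"
proof -
  from ls consistent_impl_exec plain_exec_call abstracts_impl_exec
  obtain stmp' so' g where "let S' = {(e, a). e \<in> call_evs \<and> a \<in> stmp' e};
            X0 = \<lparr> ev = call_evs, po = call_po, stmp = stmp', so = so', hb = {} \<rparr>
        in (\<forall>e\<in>call_evs. stmp' e \<noteq> {}) \<and> (\<forall>e. e \<notin> call_evs \<longrightarrow> stmp' e = {}) \<and>
           so' \<subseteq> S' \<times> S' \<and>
           (\<forall>x\<in>S'. g x \<in> SEv impl_exec) \<and>
           (\<forall>e' a' e a. (e', a') \<in> S' \<and> g (e', a') = (e, a) \<longrightarrow>
               abs_ev e = e' \<and>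
               (\<forall>a0. (a0, a') \<in> to \<longrightarrow> (\<exists>e1 a1. (e1, a1) \<in> SEv impl_exec \<and> abs_ev e1 = e' \<and> (a0, a1) \<in> to \<and>
                                               ((e1, a1), (e, a)) \<in> (hb impl_exec)\<^sup>*)) \<and>
               (\<forall>a0. (a', a0) \<in> to \<longrightarrow> (\<exists>e2 a2. (e2, a2) \<in> SEv impl_exec \<and> abs_ev e2 = e' \<and> (a2, a0) \<in> to \<and>
                                               ((e, a), (e2, a2)) \<in> (hb impl_exec)\<^sup>*))) \<and>
           (\<forall>(x, y)\<in>so'. (g x, g y) \<in> hb impl_exec) \<and>
           (\<forall>hb'. hb' \<subseteq> S' \<times> S' \<and> trans hb' \<and> (ppo to X0 \<union> so')\<^sup>+ \<subseteq> hb' \<and>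
                  (\<forall>(x, y)\<in>hb'. (g x, g y) \<in> hb impl_exec)
                  \<longrightarrow> X0\<lparr>hb := hb'\<rparr> \<in> lC L)"
    unfolding locally_sound_def by blast
  then have "lifted_run T to \<Lambda> L I ps vs X Gs BB \<nu> stmp' so' g"
    unfolding lifted_run_def lifted_run_axioms_def Let_def call_sevs_def[symmetric] call_exec_def[symmetric]
    using translated_run_axioms by simp
  then show ?thesis by blast
qed

end

context lifted_run
begin

lemma g_stamp_before:
  assumes "(e', a') \<in> call_sevs stmp'" "g (e', a') = (e, a)" "(a0, a') \<in> to"
  obtains e1 a1 where "e1 \<in> impl_evs" "a1 \<in> stmp X e1" "abs_ev e1 = e'" "(a0, a1) \<in> to"
    "((e1, a1), (e, a)) \<in> (hb impl_exec)\<^sup>*"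
  using g_stamps assms unfolding SEv_impl_exec by blast

lemma g_stamp_after:
  assumes "(e', a') \<in> call_sevs stmp'" "g (e', a') = (e, a)" "(a', a0) \<in> to"
  obtains e2 a2 where "e2 \<in> impl_evs" "a2 \<in> stmp X e2" "abs_ev e2 = e'" "(a2, a0) \<in> to"
    "((e, a), (e2, a2)) \<in> (hb impl_exec)\<^sup>*"
  using g_stamps assms unfolding SEv_impl_exec by blast

lemma trans_hb_impl_exec: "trans (hb impl_exec)"
  using consistent_impl_exec unfolding consistent_def by blast

lemma hb_impl_exec_subset: "hb impl_exec \<subseteq> hb X"
  unfolding impl_exec_simps by blast

lemma ppo_impl_exec_hb:
  "(x, y) \<in> po X \<Longrightarrow> x \<in> impl_evs \<Longrightarrow> y \<in> impl_evs \<Longrightarrow> a \<in> stmp X x \<Longrightarrow> b \<in> stmp X y \<Longrightarrow> (a, b) \<in> to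
   \<Longrightarrow> ((x, a), (y, b)) \<in> hb impl_exec"
  using ppo_X_hb unfolding impl_exec_simps by simp

lemma call_ppo_hb:
  assumes "(e1, e2) \<in> collapse_rel abs_ev (po X)" "e1 \<in> call_evs" "e2 \<in> call_evs"
    and "a1 \<in> stmp' e1" "a2 \<in> stmp' e2" "(a1, a2) \<in> to"
  shows "(g (e1, a1), g (e2, a2)) \<in> hb impl_exec"
proof -
  have s: "(e1, a1) \<in> call_sevs stmp'" "(e2, a2) \<in> call_sevs stmp'"
    using assms unfolding call_sevs_def by auto
  obtain e a where ea: "g (e1, a1) = (e, a)" by (cases "g (e1, a1)")
  obtain e'' a'' where ea2: "g (e2, a2) = (e'', a'')" by (cases "g (e2, a2)")
  obtain x ax where x: "x \<in> impl_evs" "ax \<in> stmp X x" "abs_ev x = e1" "(ax, a2) \<in> to"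
    "((e, a), (x, ax)) \<in> (hb impl_exec)\<^sup>*"
    using g_stamp_after[OF s(1) ea assms(6)] by blast
  obtain y ay where y: "y \<in> impl_evs" "ay \<in> stmp X y" "abs_ev y = e2" "(ax, ay) \<in> to"
    "((y, ay), (e'', a'')) \<in> (hb impl_exec)\<^sup>*"
    using g_stamp_before[OF s(2) ea2 x(4)] by blast
  have "(x, y) \<in> po X" using po_reflect x(1,3) y(1,3) assms(1) impl_evs_subset by blast
  then have "((x, ax), (y, ay)) \<in> hb impl_exec" using ppo_impl_exec_hb x y by blast
  then have "((e, a), (e'', a'')) \<in> hb impl_exec"
    using trans_rtrancl_step[OF trans_hb_impl_exec x(5) _ y(5)] by blast
  then show ?thesis using ea ea2 by simp
qed

lemma call_client_ppo_hb:
  assumes "(e1, e2) \<in> collapse_rel abs_ev (po X)" "e1 \<in> call_evs" "e2 \<in> client_evs"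
    and "a1 \<in> stmp' e1" "a2 \<in> stmp X e2" "(a1, a2) \<in> to"
  shows "(g (e1, a1), (e2, a2)) \<in> hb X"
proof -
  have s: "(e1, a1) \<in> call_sevs stmp'" using assms unfolding call_sevs_def by auto
  obtain e a where ea: "g (e1, a1) = (e, a)" by (cases "g (e1, a1)")
  obtain x ax where x: "x \<in> impl_evs" "ax \<in> stmp X x" "abs_ev x = e1" "(ax, a2) \<in> to"
    "((e, a), (x, ax)) \<in> (hb impl_exec)\<^sup>*"
    using g_stamp_after[OF s ea assms(6)] by blast
  have "(abs_ev x, abs_ev e2) \<in> collapse_rel abs_ev (po X)"
    using assms(1) x(3) abs_ev_client_evs[OF assms(3)] by simp
  then have "(x, e2) \<in> po X"
    using po_reflect x(1) assms(3) impl_evs_subset client_evs_subset by blast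
  then have "((x, ax), (e2, a2)) \<in> hb X" using ppo_X_hb x(2,4) assms(5) by blast
  moreover have "((e, a), (x, ax)) \<in> (hb X)\<^sup>*" using x(5) rtrancl_mono[OF hb_impl_exec_subset] by blast
  ultimately have "((e, a), (e2, a2)) \<in> hb X"
    using trans_rtrancl_step[OF trans_hb_X _ _ rtrancl_refl] by blast
  then show ?thesis using ea by simp
qed

lemma client_call_ppo_hb:
  assumes "(e1, e2) \<in> collapse_rel abs_ev (po X)" "e1 \<in> client_evs" "e2 \<in> call_evs"
    and "a1 \<in> stmp X e1" "a2 \<in> stmp' e2" "(a1, a2) \<in> to"
  shows "((e1, a1), g (e2, a2)) \<in> hb X"
proof -
  have s: "(e2, a2) \<in> call_sevs stmp'" using assms unfolding call_sevs_def by auto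
  obtain e a where ea: "g (e2, a2) = (e, a)" by (cases "g (e2, a2)")
  obtain y ay where y: "y \<in> impl_evs" "ay \<in> stmp X y" "abs_ev y = e2" "(a1, ay) \<in> to"
    "((y, ay), (e, a)) \<in> (hb impl_exec)\<^sup>*"
    using g_stamp_before[OF s ea assms(6)] by blast
  have "(abs_ev e1, abs_ev y) \<in> collapse_rel abs_ev (po X)"
    using assms(1) y(3) abs_ev_client_evs[OF assms(2)] by simp
  then have "(e1, y) \<in> po X"
    using po_reflect y(1) assms(2) impl_evs_subset client_evs_subset by blast
  then have "((e1, a1), (y, ay)) \<in> hb X" using ppo_X_hb y(2,4) assms(4) by blast
  moreover have "((y, ay), (e, a)) \<in> (hb X)\<^sup>*" using y(5) rtrancl_mono[OF hb_impl_exec_subset] by blast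
  ultimately have "((e1, a1), (e, a)) \<in> hb X"
    using trans_rtrancl_step[OF trans_hb_X rtrancl_refl] by blast
  then show ?thesis using ea by simp
qed

definition "orig x = (if fst x \<in> call_evs then g x else x)"
definition "lifted_stmp e = (if e \<in> call_evs then stmp' e else if e \<in> client_evs then stmp X e else {})"
definition "lifted_sevs = {(e, a). e \<in> client_evs \<union> call_evs \<and> a \<in> lifted_stmp e}"
definition "lifted_so = so X \<inter> {(x, y). fst x \<in> client_evs \<and> fst y \<in> client_evs} \<union> so'"
(* Happens-before is pulled back from X along orig; the conditions on g in lifted_run are exactly
   what is needed for preserved program order to land in it. *)
definition "lifted_hb = {(x, y). x \<in> lifted_sevs \<and> y \<in> lifted_sevs \<and> (orig x, orig y) \<in> hb X}"
definition "lifted_exec =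
  \<lparr>ev = client_evs \<union> call_evs, po = collapse_rel abs_ev (po X), stmp = lifted_stmp, so = lifted_so, hb = lifted_hb\<rparr>"

lemma lifted_exec_simps:
  "ev lifted_exec = client_evs \<union> call_evs" "po lifted_exec = collapse_rel abs_ev (po X)"
  "stmp lifted_exec = lifted_stmp" "so lifted_exec = lifted_so" "hb lifted_exec = lifted_hb"
  by (simp_all add: lifted_exec_def)

lemma lifted_stmp_call: "e \<in> call_evs \<Longrightarrow> lifted_stmp e = stmp' e"
  unfolding lifted_stmp_def by simp

lemma lifted_stmp_client: "e \<in> client_evs \<Longrightarrow> lifted_stmp e = stmp X e"
  unfolding lifted_stmp_def using client_call_disjoint by auto

lemma lifted_sevs_call: "e \<in> call_evs \<Longrightarrow> (e, a) \<in> lifted_sevs \<longleftrightarrow> (e, a) \<in> call_sevs stmp'"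
  unfolding lifted_sevs_def call_sevs_def using lifted_stmp_call by auto

lemma lifted_sevs_client: "e \<in> client_evs \<Longrightarrow> (e, a) \<in> lifted_sevs \<longleftrightarrow> a \<in> stmp X e"
  unfolding lifted_sevs_def using lifted_stmp_client by auto

lemma orig_call: "e \<in> call_evs \<Longrightarrow> orig (e, a) = g (e, a)"
  unfolding orig_def by simp

lemma orig_client: "e \<in> client_evs \<Longrightarrow> orig (e, a) = (e, a)"
  unfolding orig_def using client_call_disjoint by auto

lemma ppo_lifted_hb: "ppo to lifted_exec \<subseteq> lifted_hb"
proof
  fix p assume "p \<in> ppo to lifted_exec"
  then obtain e1 a1 e2 a2 where p: "p = ((e1, a1), (e2, a2))" "(e1, e2) \<in> collapse_rel abs_ev (po X)"
    "a1 \<in> lifted_stmp e1" "a2 \<in> lifted_stmp e2" "(a1, a2) \<in> to"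
    unfolding ppo_def lifted_exec_def by auto
  have e: "e1 \<in> client_evs \<union> call_evs" "e2 \<in> client_evs \<union> call_evs"
    using p(3,4) unfolding lifted_stmp_def by (auto split: if_splits)
  then have sevs: "(e1, a1) \<in> lifted_sevs" "(e2, a2) \<in> lifted_sevs"
    unfolding lifted_sevs_def using p(3,4) by auto
  consider "e1 \<in> call_evs" "e2 \<in> call_evs" | "e1 \<in> call_evs" "e2 \<in> client_evs"
    | "e1 \<in> client_evs" "e2 \<in> call_evs" | "e1 \<in> client_evs" "e2 \<in> client_evs"
    using e by blast
  then have "(orig (e1, a1), orig (e2, a2)) \<in> hb X"
  proof cases
    case 1
    then show ?thesis
      using call_ppo_hb[OF p(2) 1] p(3-5) hb_impl_exec_subset lifted_stmp_call orig_call by auto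
  next
    case 2
    then show ?thesis
      using call_client_ppo_hb[OF p(2) 2] p(3-5) lifted_stmp_call lifted_stmp_client orig_call orig_client
      by simp
  next
    case 3
    then show ?thesis
      using client_call_ppo_hb[OF p(2) 3] p(3-5) lifted_stmp_call lifted_stmp_client orig_call orig_client
      by simp
  next
    case 4
    then have "(e1, e2) \<in> po X" using po_client_evs p(2) by blast
    with 4 show ?thesis using ppo_X_hb p(3-5) lifted_stmp_client orig_client by simp
  qed
  with sevs p(1) show "p \<in> lifted_hb" unfolding lifted_hb_def by simp
qed

lemma so_lifted_hb: "lifted_so \<subseteq> lifted_hb"
proof
  fix z assume z: "z \<in> lifted_so"
  obtain ex ax ey ay where xy: "z = ((ex, ax), (ey, ay))" by (cases z) auto
  from z[unfolded lifted_so_def] show "z \<in> lifted_hb"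
  proof
    assume client: "z \<in> so X \<inter> {(x, y). fst x \<in> client_evs \<and> fst y \<in> client_evs}"
    then have "z \<in> SEv X \<times> SEv X" using so_hb_X_sevs(1) by blast
    then have "ax \<in> stmp X ex" "ay \<in> stmp X ey" unfolding xy by (auto simp: SEv_def)
    moreover have "z \<in> hb X" using client consistent_ppo_so_hb(2)[OF cons] by blast
    ultimately show ?thesis
      using client unfolding lifted_hb_def xy by (simp add: lifted_sevs_client orig_client)
  next
    assume "z \<in> so'"
    then have "(ex, ax) \<in> call_sevs stmp'" "(ey, ay) \<in> call_sevs stmp'" "(g (ex, ax), g (ey, ay)) \<in> hb X"
      using so'_sevs so'_hb hb_impl_exec_subset unfolding xy by blast+
    then show ?thesis
      unfolding lifted_hb_def xy call_sevs_def by (simp add: lifted_sevs_call orig_call call_sevs_def)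
  qed
qed

lemma trans_lifted_hb: "trans lifted_hb"
  unfolding lifted_hb_def using trans_hb_X by (auto intro: transI dest: transD)

lemma irrefl_lifted_hb: "irrefl lifted_hb"
  using cons unfolding lifted_hb_def consistent_def irrefl_def by blast

lemma lifted_hb_closed: "(ppo to lifted_exec \<union> lifted_so)\<^sup>+ \<subseteq> lifted_hb"
proof -
  have "(ppo to lifted_exec \<union> lifted_so)\<^sup>+ \<subseteq> lifted_hb\<^sup>+"
    using ppo_lifted_hb so_lifted_hb by (intro trancl_mono_subset) blast
  then show ?thesis using trans_lifted_hb by simp
qed

lemma wf_lifted_exec: "wf_exec T lifted_exec"
  unfolding wf_exec_def
proof (intro conjI)
  show "plain_exec T (ev lifted_exec, po lifted_exec)"
    using plain_exec_abs abs_ev_X unfolding lifted_exec_def by simp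
  show "\<forall>e\<in>ev lifted_exec. stmp lifted_exec e \<noteq> {}"
    using stmp'_nonempty cons client_evs_subset lifted_stmp_call lifted_stmp_client
    unfolding lifted_exec_def consistent_def wf_exec_def by auto
  show "\<forall>e. e \<notin> ev lifted_exec \<longrightarrow> stmp lifted_exec e = {}"
    unfolding lifted_exec_def lifted_stmp_def by simp
  have "SEv lifted_exec = lifted_sevs" unfolding SEv_def lifted_sevs_def lifted_exec_def by simp
  moreover have "lifted_hb \<subseteq> lifted_sevs \<times> lifted_sevs" unfolding lifted_hb_def by blast
  ultimately show "so lifted_exec \<subseteq> SEv lifted_exec \<times> SEv lifted_exec"
    "hb lifted_exec \<subseteq> SEv lifted_exec \<times> SEv lifted_exec"
    using so_lifted_hb unfolding lifted_exec_def by auto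
qed

lemma evs_of_L_lifted: "evs_of L (client_evs \<union> call_evs) = call_evs"
  unfolding evs_of_def using meth_call_evs meth_client_evs by blast

lemma evs_of_lifted: "Lb \<in> \<Lambda> \<Longrightarrow> evs_of Lb (client_evs \<union> call_evs) = evs_of Lb client_evs"
  using compat meth_call_evs unfolding evs_of_def compatible_def by blast

definition "call_hb = {(x, y). x \<in> call_sevs stmp' \<and> y \<in> call_sevs stmp' \<and> (g x, g y) \<in> hb impl_exec}"

lemma lifted_hb_call_evs: "lifted_hb \<inter> {(x, y). fst x \<in> call_evs \<and> fst y \<in> call_evs} = call_hb"
proof (intro set_eqI iffI)
  fix z assume z: "z \<in> lifted_hb \<inter> {(x, y). fst x \<in> call_evs \<and> fst y \<in> call_evs}"
  obtain ex ax ey ay where xy: "z = ((ex, ax), (ey, ay))" by (cases z) auto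
  from z xy have e: "ex \<in> call_evs" "ey \<in> call_evs" by auto
  with z xy have s: "(ex, ax) \<in> call_sevs stmp'" "(ey, ay) \<in> call_sevs stmp'"
    and "(g (ex, ax), g (ey, ay)) \<in> hb X"
    unfolding lifted_hb_def by (auto simp: lifted_sevs_call orig_call)
  moreover have "g (ex, ax) \<in> SEv impl_exec" "g (ey, ay) \<in> SEv impl_exec" using g_sevs s by blast+
  ultimately have "(g (ex, ax), g (ey, ay)) \<in> hb impl_exec"
    unfolding impl_exec_simps SEv_def impl_exec_def by auto
  with s show "z \<in> call_hb" unfolding call_hb_def xy by simp
next
  fix z assume z: "z \<in> call_hb"
  obtain ex ax ey ay where xy: "z = ((ex, ax), (ey, ay))" by (cases z) auto
  from z xy have s: "(ex, ax) \<in> call_sevs stmp'" "(ey, ay) \<in> call_sevs stmp'"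
    and "(g (ex, ax), g (ey, ay)) \<in> hb impl_exec" unfolding call_hb_def by auto
  moreover from s have "ex \<in> call_evs" "ey \<in> call_evs" unfolding call_sevs_def by auto
  ultimately show "z \<in> lifted_hb \<inter> {(x, y). fst x \<in> call_evs \<and> fst y \<in> call_evs}"
    unfolding lifted_hb_def xy using hb_impl_exec_subset by (auto simp: lifted_sevs_call orig_call)
qed

lemma lifted_so_call_evs: "lifted_so \<inter> {(x, y). fst x \<in> call_evs \<and> fst y \<in> call_evs} = so'"
proof -
  have "so' \<subseteq> {(x, y). fst x \<in> call_evs \<and> fst y \<in> call_evs}"
    using so'_sevs unfolding call_sevs_def by auto
  moreover have "so X \<inter> {(x, y). fst x \<in> client_evs \<and> fst y \<in> client_evs} \<inter>
      {(x, y). fst x \<in> call_evs \<and> fst y \<in> call_evs} = {}"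
    using client_call_disjoint by auto
  ultimately show ?thesis unfolding lifted_so_def by blast
qed

lemma restrict_lib_lifted_L: "restrict_lib lifted_exec L = (call_exec stmp' so')\<lparr>hb := call_hb\<rparr>"
proof -
  have "(\<lambda>e. if e \<in> call_evs then lifted_stmp e else {}) = stmp'"
    using stmp'_outside lifted_stmp_call by (auto simp: fun_eq_iff)
  moreover have "collapse_rel abs_ev (po X) \<inter> call_evs \<times> call_evs = call_po"
    unfolding call_po_def ..
  moreover have "(client_evs \<union> call_evs) \<inter> call_evs = call_evs" by blast
  ultimately show ?thesis
    unfolding restrict_lib_def restrict_exec_def lifted_exec_simps evs_of_L_lifted
      lifted_so_call_evs lifted_hb_call_evs
    by (simp add: call_exec_def)
qed

lemma lC_restrict_lib_lifted_L: "restrict_lib lifted_exec L \<in> lC L"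
proof -
  have "trans call_hb"
    unfolding call_hb_def using trans_hb_impl_exec by (auto intro: transI dest: transD)
  moreover have "ppo to (call_exec stmp' so') \<subseteq> call_hb"
  proof
    fix p assume "p \<in> ppo to (call_exec stmp' so')"
    then obtain e1 a1 e2 a2 where p: "p = ((e1, a1), (e2, a2))" "(e1, e2) \<in> call_po"
      "a1 \<in> stmp' e1" "a2 \<in> stmp' e2" "(a1, a2) \<in> to"
      unfolding ppo_def call_exec_def by auto
    then have "e1 \<in> call_evs" "e2 \<in> call_evs" "(e1, e2) \<in> collapse_rel abs_ev (po X)"
      unfolding call_po_def by auto
    with p show "p \<in> call_hb"
      using call_ppo_hb unfolding call_hb_def call_sevs_def by simp
  qed
  moreover have "so' \<subseteq> call_hb" unfolding call_hb_def using so'_sevs so'_hb by blast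
  ultimately have "(ppo to (call_exec stmp' so') \<union> so')\<^sup>+ \<subseteq> call_hb"
    using trancl_mono_subset[of "ppo to (call_exec stmp' so') \<union> so'" call_hb] by simp
  moreover have "call_hb \<subseteq> call_sevs stmp' \<times> call_sevs stmp'" "\<forall>(x, y)\<in>call_hb. (g x, g y) \<in> hb impl_exec"
    unfolding call_hb_def by blast+
  ultimately show ?thesis
    unfolding restrict_lib_lifted_L using call_exec_lib \<open>trans call_hb\<close> by blast
qed

lemma lifted_hb_client_evs:
  assumes D: "D \<subseteq> client_evs"
  shows "lifted_hb \<inter> {(x, y). fst x \<in> D \<and> fst y \<in> D} = hb X \<inter> {(x, y). fst x \<in> D \<and> fst y \<in> D}"
proof (intro set_eqI iffI)
  fix z assume z: "z \<in> lifted_hb \<inter> {(x, y). fst x \<in> D \<and> fst y \<in> D}"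
  obtain ex ax ey ay where xy: "z = ((ex, ax), (ey, ay))" by (cases z) auto
  with z D have "ex \<in> client_evs" "ey \<in> client_evs" by auto
  with z xy show "z \<in> hb X \<inter> {(x, y). fst x \<in> D \<and> fst y \<in> D}"
    unfolding lifted_hb_def by (auto simp: orig_client)
next
  fix z assume z: "z \<in> hb X \<inter> {(x, y). fst x \<in> D \<and> fst y \<in> D}"
  obtain ex ax ey ay where xy: "z = ((ex, ax), (ey, ay))" by (cases z) auto
  with z D have c: "ex \<in> client_evs" "ey \<in> client_evs" by auto
  have "z \<in> SEv X \<times> SEv X" using z so_hb_X_sevs(2) by blast
  then have "ax \<in> stmp X ex" "ay \<in> stmp X ey" unfolding xy by (auto simp: SEv_def)
  with z xy c show "z \<in> lifted_hb \<inter> {(x, y). fst x \<in> D \<and> fst y \<in> D}"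
    unfolding lifted_hb_def by (auto simp: orig_client lifted_sevs_client)
qed

lemma restrict_lib_lifted: "Lb \<in> \<Lambda> \<Longrightarrow> restrict_lib lifted_exec Lb = restrict_exec X (evs_of Lb client_evs)"
proof -
  assume Lb: "Lb \<in> \<Lambda>"
  define D where "D = evs_of Lb client_evs"
  have D: "D \<subseteq> client_evs" unfolding D_def evs_of_def by blast
  have "restrict_exec lifted_exec D = restrict_exec X D"
  proof (rule restrict_exec_cong, unfold lifted_exec_simps)
    show "(client_evs \<union> call_evs) \<inter> D = ev X \<inter> D" using D client_evs_subset by blast
    show "collapse_rel abs_ev (po X) \<inter> D \<times> D = po X \<inter> D \<times> D" using po_client_evs D by blast
    show "\<forall>e\<in>D. lifted_stmp e = stmp X e" using lifted_stmp_client D by blast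
    have "so' \<inter> {(x, y). fst x \<in> D \<and> fst y \<in> D} = {}"
    proof (rule equals0I)
      fix z assume z: "z \<in> so' \<inter> {(x, y). fst x \<in> D \<and> fst y \<in> D}"
      then have "fst z \<in> call_sevs stmp'" using so'_sevs by (auto simp: mem_Times_iff)
      then have "fst (fst z) \<in> call_evs" unfolding call_sevs_def by (simp add: case_prod_beta)
      moreover have "fst (fst z) \<in> D" using z by (simp add: mem_Times_iff)
      ultimately show False using D client_call_disjoint by blast
    qed
    moreover have "{(x, y). fst x \<in> D \<and> fst y \<in> D} \<subseteq> {(x, y). fst x \<in> client_evs \<and> fst y \<in> client_evs}"
      using D by blast
    ultimately show "lifted_so \<inter> {(x, y). fst x \<in> D \<and> fst y \<in> D} = so X \<inter> {(x, y). fst x \<in> D \<and> fst y \<in> D}"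
      unfolding lifted_so_def by blast
    show "lifted_hb \<inter> {(x, y). fst x \<in> D \<and> fst y \<in> D} = hb X \<inter> {(x, y). fst x \<in> D \<and> fst y \<in> D}"
      using D by (rule lifted_hb_client_evs)
  qed
  then show ?thesis
    unfolding restrict_lib_def lifted_exec_simps evs_of_lifted[OF Lb] D_def .
qed

lemma consistent_lifted_exec: "consistent T to (insert L \<Lambda>) lifted_exec"
  unfolding consistent_def
proof (intro conjI)
  show "wf_exec T lifted_exec" by (rule wf_lifted_exec)
  show "(ppo to lifted_exec \<union> so lifted_exec)\<^sup>+ \<subseteq> hb lifted_exec"
    unfolding lifted_exec_simps by (rule lifted_hb_closed)
  show "irrefl (hb lifted_exec)" "trans (hb lifted_exec)"
    unfolding lifted_exec_simps by (rule irrefl_lifted_hb, rule trans_lifted_hb)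
  have "client_evs \<subseteq> (\<Union>Lb\<in>\<Lambda>. evs_of Lb client_evs)"
  proof
    fix e assume e: "e \<in> client_evs"
    then have "e \<in> (\<Union>Lb\<in>\<Lambda>. evs_of Lb (ev X))" using ev_X_libs client_evs_subset by blast
    with e show "e \<in> (\<Union>Lb\<in>\<Lambda>. evs_of Lb client_evs)" unfolding evs_of_def by blast
  qed
  then show "ev lifted_exec = (\<Union>Lb\<in>insert L \<Lambda>. evs_of Lb (ev lifted_exec))"
    unfolding lifted_exec_simps using evs_of_L_lifted evs_of_lifted by (auto simp: evs_of_def)
  have "so X \<inter> {(x, y). fst x \<in> client_evs \<and> fst y \<in> client_evs} =
      (\<Union>Lb\<in>\<Lambda>. so (restrict_exec X (evs_of Lb client_evs)))"
  proof (intro set_eqI iffI)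
    fix z assume z: "z \<in> so X \<inter> {(x, y). fst x \<in> client_evs \<and> fst y \<in> client_evs}"
    then obtain Lb where Lb: "Lb \<in> \<Lambda>" "z \<in> so (restrict_lib X Lb)"
      using so_X_libs by blast
    with z show "z \<in> (\<Union>Lb\<in>\<Lambda>. so (restrict_exec X (evs_of Lb client_evs)))"
      unfolding restrict_lib_def evs_of_def by auto
  qed (auto simp: evs_of_def)
  then show "so lifted_exec = (\<Union>Lb\<in>insert L \<Lambda>. so (restrict_lib lifted_exec Lb))"
    unfolding lifted_exec_simps lifted_so_def using restrict_lib_lifted_L restrict_lib_lifted
    by (simp add: call_exec_def Un_commute)
  show "\<forall>Lb\<in>insert L \<Lambda>. restrict_lib lifted_exec Lb \<in> lC Lb"
    using lC_restrict_lib_lifted_L restrict_lib_lifted lC_client_evs by simp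
qed

lemma outcome_lifted: "vs \<in> outcome T to (insert L \<Lambda>) ps"
proof -
  have "(vs, (ev lifted_exec, po lifted_exec)) \<in> sem_conc ps"
    using sem_conc_collapse unfolding lifted_exec_simps abs_ev_X .
  with consistent_lifted_exec show ?thesis unfolding outcome_def by blast
qed

end

lemma sem_conc_transl_collapsible:
  assumes wd: "well_defined T I L \<Lambda>" and len: "length ps = T"
    and run: "(vs, G) \<in> sem_conc (transl_conc I L ps)"
  obtains Gs where "length vs = T" "fst G = (\<Union>i<T. fst (Gs ! i))" "snd G = (\<Union>i<T. snd (Gs ! i))"
    "\<forall>i<T. thread_exec (Suc i) (Gs ! i)"
    "\<forall>i<T. collapsible (Suc i) I L (Gs ! i) (\<lambda>G'. ((vs ! i, 0), G') \<in> sem (Suc i) (ps ! i))"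
proof -
  have transl: "length (transl_conc I L ps) = T"
    "\<And>i. i < T \<Longrightarrow> transl_conc I L ps ! i = transl I L (Suc i) (ps ! i)"
    using len unfolding transl_conc_def by simp_all
  from run obtain Gs where G: "G = (\<Union>i<T. fst (Gs ! i), \<Union>i<T. snd (Gs ! i))"
      "length vs = T" "length Gs = T"
    and parts: "\<forall>i<T. ((vs ! i, 0), Gs ! i) \<in> sem (Suc i) (transl_conc I L ps ! i)"
    unfolding sem_conc_def transl(1) by blast
  have "thread_exec (Suc i) (Gs ! i) \<and>
      collapsible (Suc i) I L (Gs ! i) (\<lambda>G'. ((vs ! i, 0), G') \<in> sem (Suc i) (ps ! i))" if "i < T" for i
  proof -
    from parts that have r: "((vs ! i, 0), Gs ! i) \<in> sem (Suc i) (transl I L (Suc i) (ps ! i))"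
      using transl(2) by simp
    have "Suc i \<in> {1..T}" using that by simp
    from sem_thread_exec[OF r] collapsible_transl[OF wd this r] show ?thesis by blast
  qed
  with G that show ?thesis by simp
qed

lemma outcome_transl_subset:
  fixes \<Lambda> :: "('v, 'm, 's) library set"
  assumes libs: "\<forall>Lb\<in>\<Lambda>. is_library T to Lb" and compat: "\<forall>Lb\<in>\<Lambda>. compatible L Lb"
    and wd: "well_defined T I L \<Lambda>" and ls: "locally_sound T to I L \<Lambda>"
    and len: "length ps = T"
    and locdisj: "loc_impl T (insert L \<Lambda>) I L \<inter> loc_prog (insert L \<Lambda>) ps = {}"
  shows "outcome T to \<Lambda> (transl_conc I L ps) \<subseteq> outcome T to (insert L \<Lambda>) ps"
proof
  fix vs assume "vs \<in> outcome T to \<Lambda> (transl_conc I L ps)"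
  then obtain X where cons: "consistent T to \<Lambda> X"
    and run: "(vs, (ev X, po X)) \<in> sem_conc (transl_conc I L ps)"
    unfolding outcome_def by blast
  from sem_conc_transl_collapsible[OF wd len run] obtain Gs where
    run_Gs: "length vs = T" "ev X = (\<Union>i<T. fst (Gs ! i))" "po X = (\<Union>i<T. snd (Gs ! i))"
    and threads: "\<forall>i<T. thread_exec (Suc i) (Gs ! i)"
    and parts: "\<forall>i<T. collapsible (Suc i) I L (Gs ! i) (\<lambda>G'. ((vs ! i, 0), G') \<in> sem (Suc i) (ps ! i))"
    by (auto simp only: fst_conv snd_conv)
  from parts obtain BB where BB: "\<forall>i<T. impl_blocks (Suc i) I L (Gs ! i) (BB i) \<and>
      (\<forall>f. collapses (Suc i) (Gs ! i) (BB i) f \<longrightarrow>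
         ((vs ! i, 0), collapse f (Gs ! i)) \<in> sem (Suc i) (ps ! i) \<and> coherent f (Gs ! i))"
    unfolding collapsible_def by metis
  then have blocks: "\<forall>i<T. impl_blocks (Suc i) I L (Gs ! i) (BB i)"
    and collapse: "\<forall>i<T. \<forall>f. collapses (Suc i) (Gs ! i) (BB i) f \<longrightarrow>
      ((vs ! i, 0), collapse f (Gs ! i)) \<in> sem (Suc i) (ps ! i) \<and> coherent f (Gs ! i)"
    by blast+
  have "finite (\<Union>i<T. BB i)"
    using blocks threads impl_blocks_finite unfolding thread_exec_def by blast
  then obtain \<nu> :: "('v, 'm) block \<Rightarrow> nat" where \<nu>: "inj_on \<nu> (\<Union>i<T. BB i)"
    using finite_imp_inj_to_nat_seg by blast
  interpret translated_run T to \<Lambda> L I ps vs X Gs BB \<nu>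
    by unfold_locales (fact libs compat ls len locdisj cons run_Gs threads blocks collapse \<nu>)+
  from lifted_run_exists obtain stmp' so' g where "lifted_run T to \<Lambda> L I ps vs X Gs BB \<nu> stmp' so' g"
    by blast
  then interpret lifted_run T to \<Lambda> L I ps vs X Gs BB \<nu> stmp' so' g .
  show "vs \<in> outcome T to (insert L \<Lambda>) ps" by (rule outcome_lifted)
qed

theorem mainTheorem2:
  fixes T :: nat and to :: "('s \<times> 's) set"
    and \<Lambda> :: "('v, 'm, 's) library set" and L :: "('v, 'm, 's) library"
    and I :: "('v, 'm) impl"
  assumes libs: "\<forall>Lb\<in>insert L \<Lambda>. is_library T to Lb"
    and pc: "pairwise_compatible \<Lambda>"
    and notin: "L \<notin> \<Lambda>"
    and compat: "\<forall>Lb\<in>\<Lambda>. compatible L Lb"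
    and wd: "well_defined T I L \<Lambda>"
    and ls: "locally_sound T to I L \<Lambda>"
  shows "\<forall>ps. length ps = T \<and>
              (\<forall>p\<in>set ps. seqprog p \<and> calls_in (\<Union>(lM ` insert L \<Lambda>)) p) \<and>
              loc_impl T (insert L \<Lambda>) I L \<inter> loc_prog (insert L \<Lambda>) ps = {}
           \<longrightarrow> outcome T to \<Lambda> (transl_conc I L ps) \<subseteq> outcome T to (insert L \<Lambda>) ps"
  using outcome_transl_subset[of \<Lambda> T to L I _] libs compat wd ls by blast

end
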